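(* Let $R$ be a valuation domain of cardinality $\aleph_1$ and $J/A$ a type with $J=\bigcup_{\nu<\omega_1} r_\nu^{-1}R$ as in the context. If $\Gamma'_R(J/A)\neq 0$, then there is a non-standard uniserial $R$-module of type $J/A$.
   Context: $R$ is a valuation domain with quotient field $Q\neq R$ and unit group $R^*$. Uniserial: submodules totally ordered. For $R$-submodules $A\subseteq J$ of $Q$, $J/A$ is uniserial; a uniserial module is standard if isomorphic to such a $J/A$, non-standard otherwise. For uniserial $U$ and $0\ne a\in U$, $\mathrm{Ann}(a)=\{r:ra=0\}$, $D(a)=\bigcup\{r^{-1}R: r\text{ divides }a\}$; $U$ has type $J/A$ if $J/A\cong D(a)/\mathrm{Ann}(a)$. Here $J=\bigcup_{\nu<\omega_1}r_\nu^{-1}R$, $r_\nu\ne0$, $r_\mu\mid r_\nu$ for $\mu<\nu$. For a limit $\delta<\omega_1$ let $\mathcal T^\delta_{J/A}=\{\langle u_\sigma:\sigma<\delta\rangle: u_\sigma\in R^*,\ u_\tau-u_\sigma\in r_\sigma A \text{ for all }\sigma<\tau<\delta\}$. An $\omega_1$-filtration of $R$ by subrings is an increasing chain $\{N_\alpha:\alpha<\omega_1\}$ of countable subrings with $R=\bigcup_\alpha N_\alpha$, $N_\alpha=\bigcup_{\beta<\alpha}N_\beta$ for limit $\alpha$, $R^*\cap N_\alpha$ equal to the unit group of $N_\alpha$, and $r_\nu\in N_\alpha\iff\nu<\alpha$. Fixing such a filtration, let $E'=\{\delta<\omega_1\text{ limit}: \exists\langle u_\sigma:\sigma<\delta\rangle\in\mathcal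 T^\delta_{J/A}\ \forall f\in R^*\ \exists\sigma<\delta\ \ u_\sigma f\notin N_\delta+r_\sigma A\}$. Subsets of $\omega_1$ are equivalent if they agree on a closed unbounded set; $\tilde E$ denotes the class of $E$, and $0$ the class of sets disjoint from a cub. $\Gamma'_R(J/A)=\tilde{E'}$ (independent of the choices of $r_\nu$ and filtration). *)

theory Defs
  imports Main "HOL-Computational_Algebra.Fraction_Field" "HOL-Library.Countable_Set"
begin

text \<open>R is the type 'a (an integral domain); its quotient field Q is 'a fract,
  R embedded via x \<mapsto> Fraction_Field.Fract x 1.\<close>

definition valuation_domain :: "'a::idom itself \<Rightarrow> bool" where
  "valuation_domain _ \<longleftrightarrow> (\<forall>a b::'a. a dvd b \<or> b dvd a)"

definition not_field_of_fractions :: "'a::idom itself \<Rightarrow> bool" where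
  "not_field_of_fractions _ \<longleftrightarrow> (\<exists>q::'a fract. q \<notin> range (\<lambda>x. Fraction_Field.Fract x 1))"

definition emb :: "'a::idom \<Rightarrow> 'a fract" where
  "emb x = Fraction_Field.Fract x 1"

definition Q_submodule :: "'a::idom fract set \<Rightarrow> bool" where
  "Q_submodule S \<longleftrightarrow> 0 \<in> S \<and> (\<forall>x\<in>S. \<forall>y\<in>S. x + y \<in> S)
      \<and> (\<forall>r. \<forall>x\<in>S. emb r * x \<in> S)"

definition inv_R :: "'a::idom \<Rightarrow> 'a fract set" where
  "inv_R r = {Fraction_Field.Fract s r | s. True}"

definition scal :: "'a::idom \<Rightarrow> 'a fract set \<Rightarrow> 'a fract set" where
  "scal r A = {emb r * x | x. x \<in> A}"

record ('a, 'm) rmod =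
  mcarrier :: "'m set"
  madd :: "'m \<Rightarrow> 'm \<Rightarrow> 'm"
  mzero :: "'m"
  msmul :: "'a \<Rightarrow> 'm \<Rightarrow> 'm"

definition is_rmodule :: "('a::comm_ring_1, 'm) rmod \<Rightarrow> bool" where
  "is_rmodule M \<longleftrightarrow>
     mzero M \<in> mcarrier M
   \<and> (\<forall>x\<in>mcarrier M. \<forall>y\<in>mcarrier M. madd M x y \<in> mcarrier M)
   \<and> (\<forall>r. \<forall>x\<in>mcarrier M. msmul M r x \<in> mcarrier M)
   \<and> (\<forall>x\<in>mcarrier M. \<forall>y\<in>mcarrier M. \<forall>z\<in>mcarrier M.
         madd M (madd M x y) z = madd M x (madd M y z))
   \<and> (\<forall>x\<in>mcarrier M. \<forall>y\<in>mcarrier M. madd M x y = madd M y x)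
   \<and> (\<forall>x\<in>mcarrier M. madd M (mzero M) x = x)
   \<and> (\<forall>x\<in>mcarrier M. \<exists>y\<in>mcarrier M. madd M x y = mzero M)
   \<and> (\<forall>r. \<forall>x\<in>mcarrier M. \<forall>y\<in>mcarrier M.
         msmul M r (madd M x y) = madd M (msmul M r x) (msmul M r y))
   \<and> (\<forall>r s. \<forall>x\<in>mcarrier M. msmul M (r + s) x = madd M (msmul M r x) (msmul M s x))
   \<and> (\<forall>r s. \<forall>x\<in>mcarrier M. msmul M (r * s) x = msmul M r (msmul M s x))
   \<and> (\<forall>x\<in>mcarrier M. msmul M 1 x = x)"

definition is_submodule :: "'n set \<Rightarrow> ('a::comm_ring_1, 'n) rmod \<Rightarrow> bool" where
  "is_submodule N M \<longleftrightarrow> N \<subseteq> mcarrier M \<and> mzero M \<in> N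
     \<and> (\<forall>x\<in>N. \<forall>y\<in>N. madd M x y \<in> N) \<and> (\<forall>r. \<forall>x\<in>N. msmul M r x \<in> N)"

definition uniserial :: "('a::comm_ring_1, 'm) rmod \<Rightarrow> bool" where
  "uniserial M \<longleftrightarrow> is_rmodule M \<and>
     (\<forall>N1 N2. is_submodule N1 M \<and> is_submodule N2 M \<longrightarrow> N1 \<subseteq> N2 \<or> N2 \<subseteq> N1)"

definition rmod_iso :: "('a::comm_ring_1, 'm) rmod \<Rightarrow> ('a, 'n) rmod \<Rightarrow> bool" where
  "rmod_iso M N \<longleftrightarrow> (\<exists>f. bij_betw f (mcarrier M) (mcarrier N)
     \<and> (\<forall>x\<in>mcarrier M. \<forall>y\<in>mcarrier M. f (madd M x y) = madd N (f x) (f y))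
     \<and> (\<forall>r. \<forall>x\<in>mcarrier M. f (msmul M r x) = msmul N r (f x)))"

definition qmod :: "'a::idom fract set \<Rightarrow> 'a fract set \<Rightarrow> ('a, 'a fract set) rmod" where
  "qmod J A = \<lparr> mcarrier = {(\<lambda>a. x + a) ` A | x. x \<in> J},
                madd = (\<lambda>X Y. {x + y | x y. x \<in> X \<and> y \<in> Y}),
                mzero = A,
                msmul = (\<lambda>r X. {emb r * x + a | x a. x \<in> X \<and> a \<in> A}) \<rparr>"

definition standard :: "('a::idom, 'm) rmod \<Rightarrow> bool" where
  "standard M \<longleftrightarrow> (\<exists>J A. Q_submodule J \<and> Q_submodule A \<and> A \<subseteq> J \<and> rmod_iso M (qmod J A))"

definition Ann :: "('a::idom, 'm) rmod \<Rightarrow> 'm \<Rightarrow> 'a set" where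
  "Ann M a = {r. msmul M r a = mzero M}"

definition Dset :: "('a::idom, 'm) rmod \<Rightarrow> 'm \<Rightarrow> 'a fract set" where
  "Dset M a = \<Union> {inv_R r | r. \<exists>b\<in>mcarrier M. msmul M r b = a}"

definition has_type :: "('a::idom, 'm) rmod \<Rightarrow> 'a fract set \<Rightarrow> 'a fract set \<Rightarrow> bool" where
  "has_type M J A \<longleftrightarrow> (\<exists>a\<in>mcarrier M. a \<noteq> mzero M \<and>
      rmod_iso (qmod J A) (qmod (Dset M a) (emb ` Ann M a)))"

text \<open>A well-ordered type of order type omega_1: uncountable, all proper initial
  segments countable.\<close>
definition omega1_type :: "'w::wellorder itself \<Rightarrow> bool" where
  "omega1_type _ \<longleftrightarrow> \<not> countable (UNIV :: 'w set) \<and> (\<forall>w::'w. countable {x. x < w})"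

definition limit_pt :: "'w::wellorder \<Rightarrow> bool" where
  "limit_pt d \<longleftrightarrow> (\<exists>b. b < d) \<and> (\<forall>b<d. \<exists>c. b < c \<and> c < d)"

definition club :: "'w::wellorder set \<Rightarrow> bool" where
  "club C \<longleftrightarrow> (\<forall>a. \<exists>b\<in>C. a < b)
      \<and> (\<forall>d. limit_pt d \<and> (\<forall>b<d. \<exists>c\<in>C. b < c \<and> c < d) \<longrightarrow> d \<in> C)"

text \<open>The class of E is not 0: E is not disjoint from any club (E is stationary).\<close>
definition nonzero_class :: "'w::wellorder set \<Rightarrow> bool" where
  "nonzero_class E \<longleftrightarrow> (\<forall>C. club C \<longrightarrow> E \<inter> C \<noteq> {})"

definition countable_subring :: "'a::comm_ring_1 set \<Rightarrow> bool" where
  "countable_subring N \<longleftrightarrow> countable N \<and> 0 \<in> N \<and> 1 \<in> N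
     \<and> (\<forall>x\<in>N. \<forall>y\<in>N. x + y \<in> N \<and> x - y \<in> N \<and> x * y \<in> N)"

definition omega1_filtration :: "('w::wellorder \<Rightarrow> 'a::idom set) \<Rightarrow> ('w \<Rightarrow> 'a) \<Rightarrow> bool" where
  "omega1_filtration N r \<longleftrightarrow>
     (\<forall>a. countable_subring (N a))
   \<and> (\<forall>a b. a \<le> b \<longrightarrow> N a \<subseteq> N b)
   \<and> (\<Union>a. N a) = UNIV
   \<and> (\<forall>a. limit_pt a \<longrightarrow> N a = (\<Union>b\<in>{b. b < a}. N b))
   \<and> (\<forall>a. {x \<in> N a. x dvd 1} = {x \<in> N a. \<exists>y\<in>N a. x * y = 1})
   \<and> (\<forall>v a. r v \<in> N a \<longleftrightarrow> v < a)"

definition Tseq :: "('w::wellorder \<Rightarrow> 'a::idom) \<Rightarrow> 'a fract set \<Rightarrow> 'w \<Rightarrow> ('w \<Rightarrow> 'a) \<Rightarrow> bool" where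
  "Tseq r A d u \<longleftrightarrow> (\<forall>s<d. u s dvd 1)
      \<and> (\<forall>s t. s < t \<and> t < d \<longrightarrow> emb (u t - u s) \<in> scal (r s) A)"

definition Eprime :: "('w::wellorder \<Rightarrow> 'a::idom) \<Rightarrow> ('w \<Rightarrow> 'a set) \<Rightarrow> 'a fract set \<Rightarrow> 'w set" where
  "Eprime r N A = {d. limit_pt d \<and> (\<exists>u. Tseq r A d u \<and>
      (\<forall>f. f dvd 1 \<longrightarrow> (\<exists>s<d. emb (u s * f) \<notin> {emb n + y | n y. n \<in> N d \<and> y \<in> scal (r s) A})))}"

end

theory Submission
  imports Defs
begin

text \<open>A system of units \<open>e m s\<close> (\<open>m \<le> s < \<omega>\<^sub>1\<close>) that is coherent, i.e.
  \<open>e m k \<cdot> e k s \<equiv> e m s (mod r\<^sub>m A)\<close>, glues the modules \<open>r\<^sub>s\<^sup>-\<^sup>1R/A\<close> along multiplication by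
  \<open>e m s\<close> into a uniserial module \<open>U\<close> of type \<open>J/A\<close>. An isomorphism \<open>U \<cong> J'/A'\<close> would produce
  units \<open>g\<close> with \<open>g m \<equiv> e m s \<cdot> g s (mod r\<^sub>m A)\<close>, so it suffices to build a coherent system
  admitting no such trivialisation. This is done by transfinite recursion: at each \<open>d \<in> E'\<close>
  where the system built so far lies in \<open>N\<^sub>d\<close>, the new column \<open>m \<mapsto> e m d\<close> is twisted by a sequence
  witnessing \<open>d \<in> E'\<close>, so that no units from \<open>N\<^sub>d\<close> trivialise it. A trivialisation \<open>g\<close> of the
  whole system would take values in \<open>N\<^sub>d\<close> for all \<open>d\<close> in a club, and \<open>E'\<close>, being
  stationary, meets that club.\<close>

section \<open>Valuation domains and the modules \<open>J/A\<close>\<close>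

lemma emb_add [simp]: "emb (a + b) = emb a + emb (b::'a::idom)"
  by (simp add: emb_def)

lemma emb_mult [simp]: "emb (a * b) = emb a * emb (b::'a::idom)"
  by (simp add: emb_def)

lemma emb_diff [simp]: "emb (a - b) = emb a - emb (b::'a::idom)"
  by (simp add: emb_def)

lemma emb_minus [simp]: "emb (- a) = - emb (a::'a::idom)"
  by (simp add: emb_def)

lemma emb_0 [simp]: "emb (0::'a::idom) = 0"
  by (simp add: emb_def fract_collapse)

lemma emb_1 [simp]: "emb (1::'a::idom) = 1"
  by (simp add: emb_def fract_collapse)

lemma emb_eq_iff [simp]: "emb a = emb b \<longleftrightarrow> a = (b::'a::idom)"
  by (simp add: emb_def eq_fract)

lemma emb_eq_0_iff [simp]: "emb a = 0 \<longleftrightarrow> a = (0::'a::idom)"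
  using emb_eq_iff[of a 0] by simp

lemma Fract_eq_emb_divide: "b \<noteq> 0 \<Longrightarrow> Fraction_Field.Fract a b = emb a / emb (b::'a::idom)"
  by (simp add: emb_def)

lemma inv_R_eq: "k \<noteq> 0 \<Longrightarrow> inv_R k = {emb c / emb k | c. True}"
  by (simp add: inv_R_def Fract_eq_emb_divide)

lemma scal_iff_divide: "k \<noteq> 0 \<Longrightarrow> x \<in> scal k A \<longleftrightarrow> x / emb k \<in> A"
  by (force simp: scal_def)

lemma emb_unit_inverse: "u * v = (1::'a::idom) \<Longrightarrow> emb u * emb v = 1"
  by (metis emb_1 emb_mult)

lemma units_mult: "a dvd 1 \<Longrightarrow> b dvd 1 \<Longrightarrow> a * b dvd (1::'a::comm_semiring_1)"
  using mult_dvd_mono[of a 1 b 1] by simp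

lemma Q_submoduleD:
  assumes "Q_submodule A"
  shows "0 \<in> A" and "x \<in> A \<Longrightarrow> y \<in> A \<Longrightarrow> x + y \<in> A" and "x \<in> A \<Longrightarrow> emb k * x \<in> A"
    and "x \<in> A \<Longrightarrow> - x \<in> A" and "x \<in> A \<Longrightarrow> y \<in> A \<Longrightarrow> x - y \<in> A"
proof -
  show "0 \<in> A" "x \<in> A \<Longrightarrow> y \<in> A \<Longrightarrow> x + y \<in> A" "x \<in> A \<Longrightarrow> emb k * x \<in> A"
    using assms unfolding Q_submodule_def by auto
  show neg: "x \<in> A \<Longrightarrow> - x \<in> A" for x
    using assms unfolding Q_submodule_def by (metis emb_minus emb_1 mult_minus1)
  show "x \<in> A \<Longrightarrow> y \<in> A \<Longrightarrow> x - y \<in> A"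
    using assms neg[of y] unfolding Q_submodule_def by (metis diff_conv_add_uminus)
qed

lemma Q_submodule_unit_mult_iff:
  assumes "Q_submodule A" and "u dvd (1::'a::idom)"
  shows "emb u * x \<in> A \<longleftrightarrow> x \<in> A"
proof
  obtain v where "1 = u * v" using assms(2) by (rule dvdE)
  then have "emb v * (emb u * x) = x"
    by (metis emb_unit_inverse mult.assoc mult.commute mult_1)
  then show "emb u * x \<in> A \<Longrightarrow> x \<in> A"
    using Q_submoduleD(3)[OF assms(1), of "emb u * x" v] by metis
qed (use Q_submoduleD(3)[OF assms(1)] in blast)

lemma valuation_unit_add_nonunit:
  assumes val: "valuation_domain TYPE('a::idom)" and u: "u dvd (1::'a)" and p: "\<not> p dvd 1"
  shows "(u + p) dvd 1"
proof (rule ccontr)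
  assume np: "\<not> (u + p) dvd 1"
  have "(u + p) dvd p \<or> p dvd (u + p)"
    using val unfolding valuation_domain_def by blast
  then show False
  proof
    assume "(u + p) dvd p"
    then have "(u + p) dvd u"
      by (metis add_diff_cancel_right' dvd_diff dvd_refl)
    then show False using np u dvd_trans by blast
  next
    assume "p dvd (u + p)"
    then have "p dvd u"
      by (metis add_diff_cancel_right' dvd_diff dvd_refl)
    then show False using p u dvd_trans by blast
  qed
qed

lemma valuation_submodule_nonunit_multiple:
  assumes val: "valuation_domain TYPE('a::idom)" and A: "Q_submodule A"
    and q: "q \<notin> A" and a: "a \<in> A"
  obtains p where "a = emb p * (q::'a fract)" and "\<not> p dvd 1"
proof (cases "a / q")
  case (Fract b c)
  have q0: "q \<noteq> 0" using q Q_submoduleD(1)[OF A] by auto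
  have "b dvd c \<or> c dvd b" using val unfolding valuation_domain_def by blast
  then show ?thesis
  proof
    assume "c dvd b"
    then obtain p where "b = c * p" by (rule dvdE)
    then have ap: "a = emb p * q" using Fract q0 by (simp add: emb_def eq_fract field_simps)
    moreover have "\<not> p dvd 1"
      using q Q_submodule_unit_mult_iff[OF A, of p q] a ap by auto
    ultimately show ?thesis by (rule that)
  next
    assume "b dvd c"
    then obtain k where k: "c = b * k" by (rule dvdE)
    have "b \<noteq> 0" "k \<noteq> 0" using Fract k by auto
    then have "a / q = 1 / emb k" using Fract k by (simp add: Fract_eq_emb_divide)
    then have "q = emb k * a" using q0 \<open>k \<noteq> 0\<close> by (simp add: field_simps)
    then show ?thesis using q Q_submoduleD(3)[OF A a] by simp
  qed
qed

definition unit_inv :: "'a::comm_monoid_mult \<Rightarrow> 'a" where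
  "unit_inv u = (SOME v. u * v = 1)"

lemma unit_inv: "u dvd 1 \<Longrightarrow> u * unit_inv u = 1"
  unfolding unit_inv_def by (rule someI_ex) (metis dvdE)

lemma unit_inv_dvd_one: "u dvd 1 \<Longrightarrow> unit_inv u dvd 1"
  using unit_inv by (metis dvd_triv_right)

lemma qmod_coset_eq_iff:
  assumes "Q_submodule A"
  shows "(\<lambda>a. x + a) ` A = (\<lambda>a. y + a) ` A \<longleftrightarrow> x - y \<in> A"
proof
  assume "(\<lambda>a. x + a) ` A = (\<lambda>a. y + a) ` A"
  moreover have "x + 0 \<in> (\<lambda>a. x + a) ` A" using Q_submoduleD(1)[OF assms] by blast
  ultimately obtain a where "a \<in> A" "x = y + a" by auto
  then show "x - y \<in> A" by simp
next
  assume d: "x - y \<in> A"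
  show "(\<lambda>a. x + a) ` A = (\<lambda>a. y + a) ` A"
  proof (intro set_eqI iffI)
    fix z assume "z \<in> (\<lambda>a. x + a) ` A"
    then obtain a where "a \<in> A" "z = y + ((x - y) + a)" by auto
    then show "z \<in> (\<lambda>a. y + a) ` A" using Q_submoduleD(2)[OF assms d] by blast
  next
    fix z assume "z \<in> (\<lambda>a. y + a) ` A"
    then obtain a where "a \<in> A" "z = x + (a - (x - y))" by auto
    then show "z \<in> (\<lambda>a. x + a) ` A" using Q_submoduleD(5)[OF assms _ d] by blast
  qed
qed

lemma msmul_qmod_coset:
  assumes "Q_submodule A"
  shows "msmul (qmod J A) k ((\<lambda>a. x + a) ` A) = (\<lambda>a. emb k * x + a) ` A"
proof (intro set_eqI iffI)
  fix z assume "z \<in> msmul (qmod J A) k ((\<lambda>a. x + a) ` A)"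
  then obtain a b where ab: "a \<in> A" "b \<in> A" "z = emb k * (x + a) + b" by (auto simp: qmod_def)
  then have "z = emb k * x + (emb k * a + b)" by (simp add: algebra_simps)
  then show "z \<in> (\<lambda>a. emb k * x + a) ` A" using Q_submoduleD(2,3)[OF assms] ab by blast
next
  fix z assume "z \<in> (\<lambda>a. emb k * x + a) ` A"
  then obtain b where b: "b \<in> A" "z = emb k * x + b" by auto
  have "x + 0 \<in> (\<lambda>a. x + a) ` A" using Q_submoduleD(1)[OF assms] by blast
  then show "z \<in> msmul (qmod J A) k ((\<lambda>a. x + a) ` A)" using b unfolding qmod_def by force
qed

lemma madd_qmod_image_mult:
  "(*) l ` madd (qmod J A) X Y = madd (qmod ((*) l ` J) ((*) l ` A)) ((*) l ` X) ((*) l ` Y)"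
proof (intro set_eqI iffI)
  fix z assume "z \<in> (*) l ` madd (qmod J A) X Y"
  then obtain x y where "x \<in> X" "y \<in> Y" "z = l * x + l * y"
    by (auto simp: qmod_def distrib_left)
  then show "z \<in> madd (qmod ((*) l ` J) ((*) l ` A)) ((*) l ` X) ((*) l ` Y)"
    by (auto simp: qmod_def)
next
  fix z assume "z \<in> madd (qmod ((*) l ` J) ((*) l ` A)) ((*) l ` X) ((*) l ` Y)"
  then obtain x y where "x \<in> X" "y \<in> Y" "z = l * (x + y)"
    by (auto simp: qmod_def distrib_left)
  then show "z \<in> (*) l ` madd (qmod J A) X Y" by (auto simp: qmod_def)
qed

lemma msmul_qmod_image_mult:
  "(*) l ` msmul (qmod J A) k X = msmul (qmod ((*) l ` J) ((*) l ` A)) k ((*) l ` X)"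
proof (intro set_eqI iffI)
  fix z assume "z \<in> (*) l ` msmul (qmod J A) k X"
  then obtain x a where "x \<in> X" "a \<in> A" "z = emb k * (l * x) + l * a"
    by (auto simp: qmod_def algebra_simps)
  then show "z \<in> msmul (qmod ((*) l ` J) ((*) l ` A)) k ((*) l ` X)"
    by (auto simp: qmod_def)
next
  fix z assume "z \<in> msmul (qmod ((*) l ` J) ((*) l ` A)) k ((*) l ` X)"
  then obtain x a where "x \<in> X" "a \<in> A" "z = l * (emb k * x + a)"
    by (auto simp: qmod_def algebra_simps)
  then show "z \<in> (*) l ` msmul (qmod J A) k X" by (auto simp: qmod_def)
qed

lemma rmod_iso_qmod_image_mult:
  assumes "l \<noteq> (0::'a::idom fract)"
  shows "rmod_iso (qmod J A) (qmod ((*) l ` J) ((*) l ` A))"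
proof -
  have inj: "inj ((*) l)" using assms by (auto intro: injI)
  have car: "mcarrier (qmod J' A') = (\<lambda>x. (+) x ` A') ` J'" for J' A' :: "'a fract set"
    by (auto simp: qmod_def)
  have "(\<lambda>X. (*) l ` X) ` mcarrier (qmod J A) = (\<lambda>x. (+) (l * x) ` (*) l ` A) ` J"
    unfolding car by (simp add: image_image distrib_left)
  also have "\<dots> = mcarrier (qmod ((*) l ` J) ((*) l ` A))"
    unfolding car by (simp add: image_image)
  finally have "(\<lambda>X. (*) l ` X) ` mcarrier (qmod J A) = mcarrier (qmod ((*) l ` J) ((*) l ` A))" .
  moreover have "inj_on (\<lambda>X. (*) l ` X) (mcarrier (qmod J A))"
    by (rule inj_onI) (simp add: inj_image_eq_iff[OF inj])
  ultimately show ?thesis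
    unfolding rmod_iso_def bij_betw_def
    by (intro exI[of _ "\<lambda>X. (*) l ` X"] conjI ballI allI madd_qmod_image_mult msmul_qmod_image_mult)
qed

lemma uniserialI:
  assumes "is_rmodule M"
    and "\<And>x y. x \<in> mcarrier M \<Longrightarrow> y \<in> mcarrier M \<Longrightarrow>
           (\<exists>k. y = msmul M k x) \<or> (\<exists>k. x = msmul M k y)"
  shows "uniserial M"
  unfolding uniserial_def
proof (intro conjI assms(1) allI impI)
  fix N1 N2 assume N: "is_submodule N1 M \<and> is_submodule N2 M"
  show "N1 \<subseteq> N2 \<or> N2 \<subseteq> N1"
  proof (rule ccontr)
    assume "\<not> (N1 \<subseteq> N2 \<or> N2 \<subseteq> N1)"
    then obtain x y where "x \<in> N1" "x \<notin> N2" "y \<in> N2" "y \<notin> N1" by auto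
    moreover from this N have "x \<in> mcarrier M" "y \<in> mcarrier M"
      unfolding is_submodule_def by auto
    ultimately show False
      using assms(2) N unfolding is_submodule_def by metis
  qed
qed

locale pre_rmodule =
  fixes rel :: "'x \<Rightarrow> 'x \<Rightarrow> bool" and cls :: "'x \<Rightarrow> 'c"
    and add :: "'x \<Rightarrow> 'x \<Rightarrow> 'x" and zero :: 'x and smul :: "'a::comm_ring_1 \<Rightarrow> 'x \<Rightarrow> 'x"
  assumes cls_eq_iff: "cls x = cls y \<longleftrightarrow> rel x y"
    and add_cong: "rel x x' \<Longrightarrow> rel y y' \<Longrightarrow> rel (add x y) (add x' y')"
    and smul_cong: "rel x x' \<Longrightarrow> rel (smul k x) (smul k x')"
    and add_assoc: "rel (add (add x y) z) (add x (add y z))"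
    and add_commute: "rel (add x y) (add y x)"
    and zero_add: "rel (add zero x) x"
    and add_neg: "rel (add x (smul (- 1) x)) zero"
    and smul_add: "rel (smul k (add x y)) (add (smul k x) (smul k y))"
    and add_smul: "rel (smul (k + l) x) (add (smul k x) (smul l x))"
    and smul_smul: "rel (smul (k * l) x) (smul k (smul l x))"
    and smul_one: "rel (smul 1 x) x"
begin

definition rep :: "'c \<Rightarrow> 'x" where
  "rep X = (SOME x. cls x = X)"

definition quotient_rmod :: "('a, 'c) rmod" where
  "quotient_rmod = \<lparr>mcarrier = range cls, madd = (\<lambda>X Y. cls (add (rep X) (rep Y))),
     mzero = cls zero, msmul = (\<lambda>k X. cls (smul k (rep X)))\<rparr>"

lemma rel_rep: "rel (rep (cls x)) x"
  unfolding rep_def cls_eq_iff[symmetric] by (rule someI) (rule refl)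

lemma mcarrier_quotient [simp]: "mcarrier quotient_rmod = range cls"
  and mzero_quotient [simp]: "mzero quotient_rmod = cls zero"
  by (simp_all add: quotient_rmod_def)

lemma madd_cls [simp]: "madd quotient_rmod (cls x) (cls y) = cls (add x y)"
  using add_cong[OF rel_rep rel_rep] by (simp add: quotient_rmod_def cls_eq_iff)

lemma msmul_cls [simp]: "msmul quotient_rmod k (cls x) = cls (smul k x)"
  using smul_cong[OF rel_rep] by (simp add: quotient_rmod_def cls_eq_iff)

lemma is_rmodule_quotient: "is_rmodule quotient_rmod"
proof -
  have neg: "madd quotient_rmod (cls x) (cls (smul (- 1) x)) = mzero quotient_rmod" for x
    by (simp add: cls_eq_iff add_neg)
  have "\<exists>Y\<in>range cls. madd quotient_rmod X Y = mzero quotient_rmod" if "X \<in> range cls" for X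
    using that neg by blast
  then show ?thesis
    unfolding is_rmodule_def
    by (auto simp: cls_eq_iff add_assoc add_commute zero_add smul_add add_smul smul_smul smul_one)
qed

end

section \<open>Closed unbounded subsets of \<open>\<omega>\<^sub>1\<close>\<close>

lemma omega1_countable_bounded:
  assumes "omega1_type TYPE('w::wellorder)" and "countable (S :: 'w set)"
  obtains b where "\<And>s. s \<in> S \<Longrightarrow> s < b"
proof -
  have "\<exists>b. \<forall>s\<in>S. s < b"
  proof (rule ccontr)
    assume "\<not> (\<exists>b. \<forall>s\<in>S. s < b)"
    then have unbounded: "\<forall>b. \<exists>s\<in>S. b \<le> s" by (meson not_less)
    have "UNIV \<subseteq> (\<Union>s\<in>S. insert s {x. x < s})"
    proof
      fix b :: 'w
      obtain s where "s \<in> S" "b \<le> s" using unbounded by blast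
      then show "b \<in> (\<Union>s\<in>S. insert s {x. x < s})" by (auto simp: order_le_less)
    qed
    moreover have "countable (\<Union>s\<in>S. insert s {x. x < s})"
      using assms unfolding omega1_type_def by (intro countable_UN) auto
    ultimately show False
      using assms(1) countable_subset unfolding omega1_type_def by blast
  qed
  then show ?thesis using that by blast
qed

lemma omega1_exists_greater:
  assumes "omega1_type TYPE('w::wellorder)" shows "\<exists>b. a < (b :: 'w)"
proof -
  have "countable {a}" by simp
  then obtain b where "\<And>s. s \<in> {a} \<Longrightarrow> s < b" using omega1_countable_bounded[OF assms] by blast
  then show ?thesis by blast
qed

lemma omega1_club_UNIV:
  assumes "omega1_type TYPE('w::wellorder)" shows "club (UNIV :: 'w set)"
  using omega1_exists_greater[OF assms] by (simp add: club_def)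

lemma omega1_countable_in_stage:
  assumes "omega1_type TYPE('w::wellorder)" and "\<And>a b. a \<le> b \<Longrightarrow> N a \<subseteq> N b"
    and "(\<Union>a. N (a :: 'w)) = UNIV" and "countable X"
  obtains b where "X \<subseteq> N b"
proof -
  define stage where "stage x = (SOME a. x \<in> N a)" for x
  have "x \<in> (\<Union>a. N a)" for x using assms(3) by simp
  then have stage: "x \<in> N (stage x)" for x unfolding stage_def by (metis UN_E someI)
  have "countable (stage ` X)" using assms(4) by simp
  then obtain b where b: "\<And>s. s \<in> stage ` X \<Longrightarrow> s < b"
    using omega1_countable_bounded[OF assms(1)] by blast
  have "X \<subseteq> N b"
  proof
    fix x assume "x \<in> X"
    then have "stage x < b" using b by blast
    then show "x \<in> N b" using stage[of x] assms(2)[OF less_imp_le] by blast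
  qed
  then show ?thesis by (rule that)
qed

text \<open>Iterate \<open>\<alpha> \<mapsto>\<close> a stage containing all \<open>G s\<close> with \<open>s < \<alpha>\<close>, \<open>\<omega>\<close> times, and take the supremum.\<close>
lemma omega1_absorbing_above:
  assumes om: "omega1_type TYPE('w::wellorder)" and mono: "\<And>a b. a \<le> b \<Longrightarrow> N a \<subseteq> N b"
    and union: "(\<Union>a. N (a :: 'w)) = UNIV" and cG: "\<And>s. countable (G s)"
  obtains d where "a < d" and "\<And>s. s < d \<Longrightarrow> G s \<subseteq> N d"
proof -
  have step: "\<exists>b. \<alpha> < b \<and> (\<Union>s\<in>{s. s < \<alpha>}. G s) \<subseteq> N b" for \<alpha> :: 'w
  proof -
    have "countable (\<Union>s\<in>{s. s < \<alpha>}. G s)"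
      using om cG unfolding omega1_type_def by (intro countable_UN) auto
    then obtain b1 where b1: "(\<Union>s\<in>{s. s < \<alpha>}. G s) \<subseteq> N b1"
      using omega1_countable_in_stage[OF om mono union] by blast
    obtain b2 where "\<alpha> < b2" using omega1_exists_greater[OF om] by blast
    then show ?thesis
      using b1 mono[of b1 "max b1 b2"] by (intro exI[of _ "max b1 b2"]) (auto simp: less_max_iff_disj)
  qed
  define h where "h \<alpha> = (SOME b. \<alpha> < b \<and> (\<Union>s\<in>{s. s < \<alpha>}. G s) \<subseteq> N b)" for \<alpha>
  have h: "\<alpha> < h \<alpha> \<and> (\<Union>s\<in>{s. s < \<alpha>}. G s) \<subseteq> N (h \<alpha>)" for \<alpha>
    unfolding h_def by (rule someI_ex[OF step])
  then have h_gt: "\<alpha> < h \<alpha>" and h_stage: "s < \<alpha> \<Longrightarrow> G s \<subseteq> N (h \<alpha>)" for \<alpha> s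
    by blast+
  define iter where "iter n = (h ^^ n) a" for n
  have "countable (range iter)" by simp
  then obtain b where "\<And>s. s \<in> range iter \<Longrightarrow> s < b"
    using omega1_countable_bounded[OF om] by blast
  then have ex: "\<exists>b. \<forall>n. iter n < b" by blast
  define d where "d = (LEAST b. \<forall>n. iter n < b)"
  have iter_lt_d: "iter n < d" for n using LeastI_ex[OF ex] by (simp add: d_def)
  show ?thesis
  proof (rule that)
    show "a < d" using iter_lt_d[of 0] by (simp add: iter_def)
  next
    fix s assume "s < d"
    then have "\<not> (\<forall>n. iter n < s)" using not_less_Least[of s] unfolding d_def by blast
    then obtain n where "s \<le> iter n" by (meson not_less)
    then have "s < iter (Suc n)" using h_gt[of "iter n"] by (simp add: iter_def order_le_less_trans)
    then have "G s \<subseteq> N (iter (Suc (Suc n)))" using h_stage by (simp add: iter_def)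
    also have "\<dots> \<subseteq> N d" by (rule mono[OF less_imp_le[OF iter_lt_d]])
    finally show "G s \<subseteq> N d" .
  qed
qed

lemma omega1_club_absorbing:
  assumes "omega1_type TYPE('w::wellorder)" and mono: "\<And>a b. a \<le> b \<Longrightarrow> N a \<subseteq> N b"
    and "(\<Union>a. N (a :: 'w)) = UNIV" and "\<And>s. countable (G s)"
  shows "club {d. \<forall>s<d. G s \<subseteq> N d}"
  unfolding club_def
proof (intro conjI allI impI)
  fix a :: 'w
  obtain d where "a < d" "\<And>s. s < d \<Longrightarrow> G s \<subseteq> N d"
    using omega1_absorbing_above[where N = N and G = G and a = a, OF assms] by blast
  then show "\<exists>d\<in>{d. \<forall>s<d. G s \<subseteq> N d}. a < d" by blast
next
  fix d assume d: "limit_pt d \<and> (\<forall>b<d. \<exists>c\<in>{d. \<forall>s<d. G s \<subseteq> N d}. b < c \<and> c < d)"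
  show "d \<in> {d. \<forall>s<d. G s \<subseteq> N d}"
  proof (intro CollectI allI impI)
    fix s assume "s < d"
    then obtain c where c: "\<forall>s<c. G s \<subseteq> N c" "s < c" "c < d"
      using d[THEN conjunct2, rule_format, OF \<open>s < d\<close>] by blast
    then show "G s \<subseteq> N d" using mono[OF less_imp_le[OF c(3)]] by blast
  qed
qed

lemma countable_cofinal_mono_seq:
  fixes S :: "'a::linorder set"
  assumes "countable S" and "S \<noteq> {}"
  obtains M :: "nat \<Rightarrow> 'a" where "mono M" and "\<And>n. M n \<in> S" and "\<And>m. m \<in> S \<Longrightarrow> \<exists>n. m \<le> M n"
proof
  define en where "en = from_nat_into S"
  have range_en: "range en = S" using assms by (simp add: en_def range_from_nat_into)
  show "mono (\<lambda>n. Max (en ` {..n}))"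
    by (rule monoI) (auto intro!: Max_mono)
  show "Max (en ` {..n}) \<in> S" for n
  proof -
    have "Max (en ` {..n}) \<in> en ` {..n}" by (rule Max_in) auto
    then show ?thesis using range_en by blast
  qed
  show "\<exists>n. m \<le> Max (en ` {..n})" if m: "m \<in> S" for m
  proof -
    obtain k where "m = en k" using m range_en by blast
    then show ?thesis by (intro exI[of _ k]) simp
  qed
qed

section \<open>Coherent systems of units\<close>

locale valued_chain =
  fixes r :: "'w::wellorder \<Rightarrow> 'a::idom" and A :: "'a fract set"
  assumes valuation: "valuation_domain TYPE('a)"
    and r_nonzero: "r v \<noteq> 0"
    and r_dvd: "m < v \<Longrightarrow> r m dvd r v"
    and Q_submodule_A: "Q_submodule A"
begin

abbreviation cong_A :: "'a fract \<Rightarrow> 'a fract \<Rightarrow> bool" where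
  "cong_A a b \<equiv> a - b \<in> A"

lemma cong_A_refl: "cong_A a a"
  using Q_submoduleD(1)[OF Q_submodule_A] by simp

lemma cong_A_sym: "cong_A a b \<Longrightarrow> cong_A b a"
  using Q_submoduleD(4)[OF Q_submodule_A, of "a - b"] by simp

lemma cong_A_trans: "cong_A a b \<Longrightarrow> cong_A b c \<Longrightarrow> cong_A a c"
  using Q_submoduleD(2)[OF Q_submodule_A, of "a - b" "b - c"] by simp

lemma cong_A_add: "cong_A a b \<Longrightarrow> cong_A c d \<Longrightarrow> cong_A (a + c) (b + d)"
  using Q_submoduleD(2)[OF Q_submodule_A, of "a - b" "c - d"] by (simp add: algebra_simps)

lemma cong_A_mult: "cong_A a b \<Longrightarrow> cong_A (emb k * a) (emb k * b)"
  using Q_submoduleD(3)[OF Q_submodule_A, of "a - b" k] by (simp add: algebra_simps)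

lemma cong_A_unit_mult_iff: "u dvd 1 \<Longrightarrow> cong_A (emb u * a) (emb u * b) \<longleftrightarrow> cong_A a b"
  using Q_submodule_unit_mult_iff[OF Q_submodule_A, of u "a - b"] by (simp add: algebra_simps)

text \<open>\<open>cong_at m x y\<close> is the congruence \<open>x \<equiv> y (mod r\<^sub>m A)\<close> of the paper.\<close>
definition cong_at :: "'w \<Rightarrow> 'a \<Rightarrow> 'a \<Rightarrow> bool" where
  "cong_at m x y \<longleftrightarrow> (emb x - emb y) / emb (r m) \<in> A"

lemma cong_at_iff_cong_A: "cong_at m x y \<longleftrightarrow> cong_A (emb x / emb (r m)) (emb y / emb (r m))"
  by (simp add: cong_at_def diff_divide_distrib)

lemma cong_at_refl: "cong_at m x x"
  using cong_A_refl by (simp add: cong_at_iff_cong_A)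

lemma cong_at_sym: "cong_at m x y \<Longrightarrow> cong_at m y x"
  using cong_A_sym by (simp add: cong_at_iff_cong_A)

lemma cong_at_trans [trans]: "cong_at m x y \<Longrightarrow> cong_at m y z \<Longrightarrow> cong_at m x z"
  using cong_A_trans by (simp add: cong_at_iff_cong_A)

lemma cong_at_mult_left: "cong_at m x y \<Longrightarrow> cong_at m (k * x) (k * y)"
  using cong_A_mult[of "emb x / emb (r m)" "emb y / emb (r m)" k]
  by (simp add: cong_at_iff_cong_A times_divide_eq_right)

lemma cong_at_mult_right: "cong_at m x y \<Longrightarrow> cong_at m (x * k) (y * k)"
  using cong_at_mult_left[of m x y k] by (simp add: mult.commute)

definition r_quot :: "'w \<Rightarrow> 'w \<Rightarrow> 'a" where
  "r_quot m s = (SOME k. r s = r m * k)"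

lemma r_quot: assumes "m \<le> s" shows "r s = r m * r_quot m s"
proof -
  have "r m dvd r s"
    using assms r_dvd by (cases "m = s") auto
  then show ?thesis unfolding r_quot_def by (metis (mono_tags) dvdE someI)
qed

lemma r_quot_nonzero: "m \<le> s \<Longrightarrow> r_quot m s \<noteq> 0"
  using r_quot[of m s] r_nonzero[of s] by auto

lemma cong_at_mono: assumes "m \<le> s" and "cong_at s x y" shows "cong_at m x y"
proof -
  have "(emb x - emb y) / emb (r m) = emb (r_quot m s) * ((emb x - emb y) / emb (r s))"
    using r_quot[OF assms(1)] r_nonzero[of m] r_quot_nonzero[OF assms(1)] by simp
  then show ?thesis
    using Q_submoduleD(3)[OF Q_submodule_A] assms(2) unfolding cong_at_def by metis
qed

definition trivial_system :: "('w \<Rightarrow> 'w \<Rightarrow> 'a) \<Rightarrow> bool" where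
  "trivial_system e \<longleftrightarrow>
     (\<exists>g. (\<forall>m. g m dvd 1) \<and> (\<forall>m s. m < s \<longrightarrow> cong_at m (g m) (e m s * g s)))"

definition coherent_below :: "('w \<Rightarrow> 'w \<Rightarrow> 'a) \<Rightarrow> 'w \<Rightarrow> bool" where
  "coherent_below E d \<longleftrightarrow> (\<forall>m<d. E m m = 1) \<and> (\<forall>m s. m \<le> s \<and> s < d \<longrightarrow> E m s dvd 1)
     \<and> (\<forall>m k s. m \<le> k \<and> k \<le> s \<and> s < d \<longrightarrow> cong_at m (E m k * E k s) (E m s))"

lemma coherent_below_unit: "coherent_below E d \<Longrightarrow> m \<le> s \<Longrightarrow> s < d \<Longrightarrow> E m s dvd 1"
  by (simp add: coherent_below_def)

lemma coherent_below_cong_at: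
  "coherent_below E d \<Longrightarrow> m \<le> k \<Longrightarrow> k \<le> s \<Longrightarrow> s < d \<Longrightarrow> cong_at m (E m k * E k s) (E m s)"
  by (simp add: coherent_below_def)

text \<open>A coherent column at \<open>d\<close> is a candidate for the values \<open>E m d\<close>, \<open>m < d\<close>.\<close>
definition coherent_column :: "('w \<Rightarrow> 'w \<Rightarrow> 'a) \<Rightarrow> 'w \<Rightarrow> ('w \<Rightarrow> 'a) \<Rightarrow> bool" where
  "coherent_column E d w \<longleftrightarrow> (\<forall>m<d. w m dvd 1)
     \<and> (\<forall>m k. m < k \<and> k < d \<longrightarrow> cong_at m (w m) (E m k * w k))"

text \<open>Along a cofinal sequence \<open>M\<close> in \<open>d\<close>, dividing successively by the units
  \<open>E (M n) (M (n + 1))\<close> yields a coherent column at \<open>d\<close>.\<close>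
definition chain_units :: "('w \<Rightarrow> 'w \<Rightarrow> 'a) \<Rightarrow> (nat \<Rightarrow> 'w) \<Rightarrow> nat \<Rightarrow> 'a" where
  "chain_units E M = rec_nat 1 (\<lambda>n w. w * unit_inv (E (M n) (M (Suc n))))"

definition chain_column :: "('w \<Rightarrow> 'w \<Rightarrow> 'a) \<Rightarrow> (nat \<Rightarrow> 'w) \<Rightarrow> 'w \<Rightarrow> 'a" where
  "chain_column E M m = (let n = LEAST n. m \<le> M n in E m (M n) * chain_units E M n)"

lemma chain_units_0 [simp]: "chain_units E M 0 = 1"
  and chain_units_Suc [simp]:
    "chain_units E M (Suc n) = chain_units E M n * unit_inv (E (M n) (M (Suc n)))"
  by (simp_all add: chain_units_def)

context
  fixes E d and M :: "nat \<Rightarrow> 'w"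
  assumes coherent: "coherent_below E d" and mono_M: "mono M" and M_less: "\<And>n. M n < d"
begin

lemma E_refl: "m < d \<Longrightarrow> E m m = 1"
  using coherent by (simp add: coherent_below_def)

lemmas E_unit = coherent_below_unit[OF coherent]
  and E_coherent = coherent_below_cong_at[OF coherent]

lemma chain_units_step: "E (M n) (M (Suc n)) * chain_units E M (Suc n) = chain_units E M n"
  using unit_inv[OF E_unit[OF monoD[OF mono_M] M_less, of n "Suc n"]]
  by (simp add: ac_simps)

lemma chain_units_unit: "chain_units E M n dvd 1"
  by (induction n) (auto intro!: units_mult unit_inv_dvd_one E_unit monoD[OF mono_M] M_less)

lemma chain_units_cong:
  "n \<le> j \<Longrightarrow> cong_at (M n) (chain_units E M n) (E (M n) (M j) * chain_units E M j)"
proof (induction j)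
  case 0
  then show ?case by (simp add: E_refl[OF M_less] cong_at_refl)
next
  case (Suc j)
  show ?case
  proof (cases "n = Suc j")
    case True
    then show ?thesis by (simp add: E_refl[OF M_less] cong_at_refl)
  next
    case False
    then have "n \<le> j" using Suc.prems by simp
    have "E (M n) (M j) * chain_units E M j
        = E (M n) (M j) * E (M j) (M (Suc j)) * chain_units E M (Suc j)"
      using chain_units_step[of j] by (simp only: mult.assoc)
    then have "cong_at (M n) (chain_units E M n)
        (E (M n) (M j) * E (M j) (M (Suc j)) * chain_units E M (Suc j))"
      using Suc.IH[OF \<open>n \<le> j\<close>] by (simp only:)
    moreover have "cong_at (M n) (E (M n) (M j) * E (M j) (M (Suc j)) * chain_units E M (Suc j))
        (E (M n) (M (Suc j)) * chain_units E M (Suc j))"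
      using \<open>n \<le> j\<close> by (intro cong_at_mult_right E_coherent monoD[OF mono_M] M_less) simp_all
    ultimately show ?thesis by (rule cong_at_trans)
  qed
qed

lemma coherent_column_chain:
  assumes cofinal: "\<And>m. m < d \<Longrightarrow> \<exists>n. m \<le> M n"
  shows "coherent_column E d (chain_column E M)"
proof -
  define idx where "idx m = (LEAST n. m \<le> M n)" for m
  have idx: "m \<le> M (idx m)" if "m < d" for m
    unfolding idx_def using cofinal[OF that] by (rule LeastI_ex)
  have idx_least: "m \<le> M n \<Longrightarrow> idx m \<le> n" for m n
    unfolding idx_def by (rule Least_le)
  have column: "chain_column E M m = E m (M (idx m)) * chain_units E M (idx m)" for m
    by (simp add: chain_column_def idx_def Let_def)
  have unit: "chain_column E M m dvd 1" if "m < d" for m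
    unfolding column using idx[OF that] M_less
    by (intro units_mult E_unit chain_units_unit)
  have cong: "cong_at m (chain_column E M m) (E m k * chain_column E M k)" if "m < k" "k < d" for m k
  proof -
    define a b where "a = idx m" and "b = idx k"
    have ma: "m \<le> M a" and kb: "k \<le> M b" using idx that by (auto simp: a_def b_def)
    then have "a \<le> b" using idx_least[of m b] \<open>m < k\<close> by (simp add: a_def)
    then have ab: "M a \<le> M b" by (rule monoD[OF mono_M])
    have "cong_at m (chain_column E M m) (E m (M a) * (E (M a) (M b) * chain_units E M b))"
      unfolding column a_def[symmetric]
      using cong_at_mono[OF ma chain_units_cong[OF \<open>a \<le> b\<close>]] by (rule cong_at_mult_left)
    also have "cong_at m \<dots> (E m (M b) * chain_units E M b)"
      using ma ab M_less unfolding mult.assoc[symmetric] by (intro cong_at_mult_right E_coherent)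
    finally have "cong_at m (chain_column E M m) (E m (M b) * chain_units E M b)" .
    moreover have "cong_at m (E m k * chain_column E M k) (E m (M b) * chain_units E M b)"
      unfolding column b_def[symmetric] mult.assoc[symmetric]
      using that kb M_less by (intro cong_at_mult_right E_coherent) simp_all
    ultimately show ?thesis using cong_at_sym cong_at_trans by blast
  qed
  show ?thesis using unit cong by (simp add: coherent_column_def)
qed

end

lemma coherent_below_of_columns:
  assumes refl: "\<And>m. m < d \<Longrightarrow> E m m = 1"
    and columns: "\<And>s. s < d \<Longrightarrow> coherent_column E s (\<lambda>m. E m s)"
  shows "coherent_below E d"
  unfolding coherent_below_def
proof (intro conjI allI impI)
  show "E m m = 1" if "m < d" for m using refl that .
  show "E m s dvd 1" if "m \<le> s \<and> s < d" for m s
    using that refl columns[of s] by (cases "m = s") (auto simp: coherent_column_def)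
  show "cong_at m (E m k * E k s) (E m s)" if "m \<le> k \<and> k \<le> s \<and> s < d" for m k s
  proof (cases "m = k \<or> k = s")
    case True
    then show ?thesis using that refl by (auto simp: cong_at_refl)
  next
    case False
    then have "m < k" "k < s" using that by auto
    then show ?thesis using that columns[of s] cong_at_sym by (auto simp: coherent_column_def)
  qed
qed

lemma coherent_column_cong:
  assumes "\<And>m k. k < d \<Longrightarrow> E m k = E' m k" and "\<And>m. m < d \<Longrightarrow> w m = w' m"
  shows "coherent_column E d w \<longleftrightarrow> coherent_column E' d w'"
proof -
  have "cong_at m (w m) (E m k * w k) \<longleftrightarrow> cong_at m (w' m) (E' m k * w' k)"
    if "m < k" "k < d" for m k
    using assms that less_trans[OF that] by simp
  then have "(\<forall>m k. m < k \<and> k < d \<longrightarrow> cong_at m (w m) (E m k * w k))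
      \<longleftrightarrow> (\<forall>m k. m < k \<and> k < d \<longrightarrow> cong_at m (w' m) (E' m k * w' k))"
    by blast
  moreover have "(\<forall>m<d. w m dvd 1) \<longleftrightarrow> (\<forall>m<d. w' m dvd 1)" using assms(2) by simp
  ultimately show ?thesis by (simp only: coherent_column_def)
qed

lemma Tseq_cong_at:
  assumes "Tseq r A d u" and "m < k" and "k < d" shows "cong_at m (u k) (u m)"
proof -
  have "emb (u k - u m) \<in> scal (r m) A" using assms unfolding Tseq_def by blast
  then show ?thesis by (simp add: scal_iff_divide[OF r_nonzero] cong_at_def)
qed

lemma coherent_column_mult_Tseq:
  assumes w: "coherent_column E d w" and u: "Tseq r A d u"
  shows "coherent_column E d (\<lambda>m. w m * u m)"
  unfolding coherent_column_def
proof (intro conjI allI impI)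
  show "w m * u m dvd 1" if "m < d" for m
    using that w u by (intro units_mult) (auto simp: coherent_column_def Tseq_def)
  show "cong_at m (w m * u m) (E m k * (w k * u k))" if "m < k \<and> k < d" for m k
  proof -
    have "cong_at m (w m * u m) (E m k * w k * u m)"
      using w that by (intro cong_at_mult_right) (simp add: coherent_column_def)
    also have "cong_at m \<dots> (E m k * w k * u k)"
      using Tseq_cong_at[OF u] that by (intro cong_at_mult_left) (simp add: cong_at_sym)
    finally show ?thesis by (simp add: mult.assoc)
  qed
qed

end

section \<open>The uniserial module of a coherent system\<close>

text \<open>A coherent system of units \<open>e m s\<close> (\<open>m \<le> s\<close>) glues the modules \<open>r\<^sub>s\<^sup>-\<^sup>1R/A\<close> into a direct
  limit: a pair \<open>(m, c)\<close> stands for \<open>c/r\<^sub>m\<close> at level \<open>m\<close>, and passing to level \<open>s\<close> multiplies by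
  \<open>e m s\<close>. The classes of pairs are encoded as subsets of \<open>Q\<close> via the injection \<open>enc\<close>, only
  to give the module the carrier type of the theorem.\<close>
locale coherent_system = valued_chain r A for r :: "'w::wellorder \<Rightarrow> 'a::idom" and A +
  fixes e :: "'w \<Rightarrow> 'w \<Rightarrow> 'a" and enc :: "'w \<times> 'a \<Rightarrow> 'a fract"
  assumes e_refl: "e m m = 1"
    and e_unit: "m \<le> s \<Longrightarrow> e m s dvd 1"
    and e_coherent: "m \<le> k \<Longrightarrow> k \<le> s \<Longrightarrow> cong_at m (e m k * e k s) (e m s)"
    and inj_enc: "inj enc"
begin

definition coord :: "'w \<Rightarrow> 'w \<times> 'a \<Rightarrow> 'a fract" where
  "coord s x = emb (snd x * e (fst x) s) / emb (r (fst x))"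

lemma coord_shift:
  assumes "fst x \<le> s" "s \<le> u"
  shows "cong_A (coord u x) (emb (e s u) * coord s x)"
proof -
  have "cong_A (emb (e (fst x) s * e s u) / emb (r (fst x))) (emb (e (fst x) u) / emb (r (fst x)))"
    using e_coherent[OF assms] by (simp add: cong_at_iff_cong_A)
  then have "cong_A (emb (snd x) * (emb (e (fst x) s * e s u) / emb (r (fst x))))
      (emb (snd x) * (emb (e (fst x) u) / emb (r (fst x))))"
    by (rule cong_A_mult)
  moreover have "emb (snd x) * (emb (e (fst x) s * e s u) / emb (r (fst x))) = emb (e s u) * coord s x"
    "emb (snd x) * (emb (e (fst x) u) / emb (r (fst x))) = coord u x"
    by (simp_all add: coord_def ac_simps)
  ultimately show ?thesis using cong_A_sym by simp
qed

definition rel :: "'w \<times> 'a \<Rightarrow> 'w \<times> 'a \<Rightarrow> bool" where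
  "rel x y \<longleftrightarrow> cong_A (coord (max (fst x) (fst y)) x) (coord (max (fst x) (fst y)) y)"

lemma rel_iff_coord:
  assumes "fst x \<le> s" "fst y \<le> s"
  shows "rel x y \<longleftrightarrow> cong_A (coord s x) (coord s y)"
proof -
  define m where "m = max (fst x) (fst y)"
  have "m \<le> s" using assms by (simp add: m_def)
  then have "cong_A (coord s x) (emb (e m s) * coord m x)" "cong_A (coord s y) (emb (e m s) * coord m y)"
    using coord_shift by (simp_all add: m_def)
  then have "cong_A (coord s x) (coord s y) \<longleftrightarrow> cong_A (emb (e m s) * coord m x) (emb (e m s) * coord m y)"
    by (meson cong_A_sym cong_A_trans)
  also have "\<dots> \<longleftrightarrow> rel x y"
    using cong_A_unit_mult_iff e_unit[OF \<open>m \<le> s\<close>] by (simp add: rel_def m_def)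
  finally show ?thesis ..
qed

lemma rel_refl: "rel x x"
  unfolding rel_def by (rule cong_A_refl)

lemma rel_sym: "rel x y \<Longrightarrow> rel y x"
  by (simp add: rel_def cong_A_sym max.commute)

lemma rel_trans: assumes "rel x y" "rel y z" shows "rel x z"
proof -
  define s where "s = max (fst x) (max (fst y) (fst z))"
  have "fst x \<le> s" "fst y \<le> s" "fst z \<le> s" by (auto simp: s_def le_max_iff_disj)
  then show ?thesis using assms rel_iff_coord cong_A_trans by meson
qed

definition lift :: "'w \<times> 'a \<Rightarrow> 'w \<Rightarrow> 'w \<times> 'a" where
  "lift x s = (s, snd x * r_quot (fst x) s * e (fst x) s)"

lemma fst_lift [simp]: "fst (lift x s) = s"
  by (simp add: lift_def)

lemma rel_lift: assumes "fst x \<le> s" shows "rel (lift x s) x"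
proof -
  have "coord s (lift x s) = coord s x"
    using r_quot[OF assms] r_nonzero[of "fst x"] r_quot_nonzero[OF assms]
    by (simp add: coord_def lift_def e_refl)
  then show ?thesis
    using rel_iff_coord[of "lift x s" s x] assms cong_A_refl by (simp add: lift_def)
qed

definition radd :: "'w \<times> 'a \<Rightarrow> 'w \<times> 'a \<Rightarrow> 'w \<times> 'a" where
  "radd x y = (let m = max (fst x) (fst y) in (m, snd (lift x m) + snd (lift y m)))"

definition rsmul :: "'a \<Rightarrow> 'w \<times> 'a \<Rightarrow> 'w \<times> 'a" where
  "rsmul k x = (fst x, k * snd x)"

definition rzero :: "'w \<times> 'a" where
  "rzero = (LEAST s. True, 0)"

lemma fst_radd [simp]: "fst (radd x y) = max (fst x) (fst y)"
  by (simp add: radd_def Let_def)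

lemma fst_rsmul [simp]: "fst (rsmul k x) = fst x"
  by (simp add: rsmul_def)

lemma rsmul_pair [simp]: "rsmul k (s, c) = (s, k * c)"
  by (simp add: rsmul_def)

lemma fst_rzero_le: "fst rzero \<le> s"
  by (simp add: rzero_def Least_le)

lemma coord_radd:
  assumes "fst x \<le> s" "fst y \<le> s"
  shows "cong_A (coord s (radd x y)) (coord s x + coord s y)"
proof -
  define m where "m = max (fst x) (fst y)"
  have "coord s (radd x y) = coord s (lift x m) + coord s (lift y m)"
    by (simp add: radd_def m_def[symmetric] lift_def coord_def add_divide_distrib distrib_right)
  moreover have "m \<le> s" using assms by (simp add: m_def)
  then have "cong_A (coord s (lift x m)) (coord s x)" "cong_A (coord s (lift y m)) (coord s y)"
    using rel_lift[of x m] rel_lift[of y m] rel_iff_coord[of "lift x m" s x]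
      rel_iff_coord[of "lift y m" s y] assms by (simp_all add: m_def)
  ultimately show ?thesis using cong_A_add by simp
qed

lemma coord_rsmul: "coord s (rsmul k x) = emb k * coord s x"
  by (simp add: rsmul_def coord_def)

lemma coord_rzero: "coord s rzero = 0"
  by (simp add: rzero_def coord_def)

definition cls :: "'w \<times> 'a \<Rightarrow> 'a fract set" where
  "cls x = enc ` {y. rel y x}"

lemma cls_eq_iff: "cls x = cls y \<longleftrightarrow> rel x y"
proof
  assume "cls x = cls y"
  then have "{z. rel z x} = {z. rel z y}" by (simp add: cls_def inj_image_eq_iff[OF inj_enc])
  then show "rel x y" using rel_refl by blast
qed (auto simp: cls_def intro: rel_trans rel_sym)

lemma coord_radd_cong:
  assumes "fst x \<le> s" "fst y \<le> s" "cong_A (coord s x) a" "cong_A (coord s y) b"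
  shows "cong_A (coord s (radd x y)) (a + b)"
  using cong_A_trans[OF coord_radd[OF assms(1,2)] cong_A_add[OF assms(3,4)]] .

lemma coord_rsmul_cong: "cong_A (coord s x) a \<Longrightarrow> cong_A (coord s (rsmul k x)) (emb k * a)"
  by (simp add: coord_rsmul cong_A_mult)

lemma coord_rzero_cong: "cong_A (coord s rzero) 0"
  using cong_A_refl[of 0] by (simp add: coord_rzero)

lemma rel_via_coord:
  assumes "fst x \<le> s" "fst y \<le> s" "cong_A (coord s x) a" "cong_A (coord s y) b" "a = b"
  shows "rel x y"
  using assms rel_iff_coord cong_A_sym cong_A_trans by meson

lemma rel_radd_cong:
  assumes "rel x x'" "rel y y'" shows "rel (radd x y) (radd x' y')"
proof -
  define s where "s = max (max (fst x) (fst y)) (max (fst x') (fst y'))"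
  have le: "fst x \<le> s" "fst y \<le> s" "fst x' \<le> s" "fst y' \<le> s"
    by (auto simp: s_def le_max_iff_disj)
  have "cong_A (coord s x) (coord s x')" "cong_A (coord s y) (coord s y')"
    using assms rel_iff_coord le by blast+
  then have "cong_A (coord s (radd x y)) (coord s x' + coord s y')"
    using le by (intro coord_radd_cong)
  then show ?thesis
    using le coord_radd_cong[OF le(3,4) cong_A_refl cong_A_refl] by (intro rel_via_coord[of _ s]) auto
qed

lemma rel_rsmul_cong:
  assumes "rel x x'" shows "rel (rsmul k x) (rsmul k x')"
proof -
  define s where "s = max (fst x) (fst x')"
  have le: "fst x \<le> s" "fst x' \<le> s" by (auto simp: s_def)
  then have "cong_A (coord s (rsmul k x)) (coord s (rsmul k x'))"
    using assms rel_iff_coord cong_A_mult by (simp add: coord_rsmul)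
  then show ?thesis using rel_iff_coord le by simp
qed

text \<open>At a common level \<open>s\<close> every module axiom becomes an identity in \<open>Q\<close> modulo \<open>A\<close>.\<close>
sublocale pre_rmodule rel cls radd rzero rsmul
proof
  fix x y z x' y' :: "'w \<times> 'a" and k l :: 'a
  define s where "s = max (fst x) (max (fst y) (fst z))"
  have le: "fst x \<le> s" "fst y \<le> s" "fst z \<le> s" "fst rzero \<le> s"
    by (auto simp: s_def le_max_iff_disj fst_rzero_le)
  show "cls x = cls y \<longleftrightarrow> rel x y" by (rule cls_eq_iff)
  show "rel x x' \<Longrightarrow> rel y y' \<Longrightarrow> rel (radd x y) (radd x' y')" by (rule rel_radd_cong)
  show "rel x x' \<Longrightarrow> rel (rsmul k x) (rsmul k x')" by (rule rel_rsmul_cong)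
  let ?x = "coord s x" and ?y = "coord s y" and ?z = "coord s z"
  show "rel (radd (radd x y) z) (radd x (radd y z))"
    by (rule rel_via_coord[of _ s _ "?x + ?y + ?z" "?x + (?y + ?z)"];
        (intro coord_radd_cong cong_A_refl)?) (simp_all add: le algebra_simps)
  show "rel (radd x y) (radd y x)"
    by (rule rel_via_coord[of _ s _ "?x + ?y" "?y + ?x"];
        (intro coord_radd_cong coord_rsmul_cong coord_rzero_cong cong_A_refl)?)
      (simp_all add: le algebra_simps)
  show "rel (radd rzero x) x"
    by (rule rel_via_coord[of _ s _ "0 + ?x" "?x"];
        (intro coord_radd_cong coord_rsmul_cong coord_rzero_cong cong_A_refl)?)
      (simp_all add: le algebra_simps)
  show "rel (radd x (rsmul (- 1) x)) rzero"
    by (rule rel_via_coord[of _ s _ "?x + emb (- 1) * ?x" "0"];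
        (intro coord_radd_cong coord_rsmul_cong coord_rzero_cong cong_A_refl)?)
      (simp_all add: le algebra_simps)
  show "rel (rsmul k (radd x y)) (radd (rsmul k x) (rsmul k y))"
    by (rule rel_via_coord[of _ s _ "emb k * (?x + ?y)" "emb k * ?x + emb k * ?y"];
        (intro coord_radd_cong coord_rsmul_cong coord_rzero_cong cong_A_refl)?)
      (simp_all add: le algebra_simps)
  show "rel (rsmul (k + l) x) (radd (rsmul k x) (rsmul l x))"
    by (rule rel_via_coord[of _ s _ "emb (k + l) * ?x" "emb k * ?x + emb l * ?x"];
        (intro coord_radd_cong coord_rsmul_cong coord_rzero_cong cong_A_refl)?)
      (simp_all add: le algebra_simps)
  show "rel (rsmul (k * l) x) (rsmul k (rsmul l x))"
    by (rule rel_via_coord[of _ s _ "emb (k * l) * ?x" "emb k * (emb l * ?x)"];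
        (intro coord_radd_cong coord_rsmul_cong coord_rzero_cong cong_A_refl)?)
      (simp_all add: le algebra_simps)
  show "rel (rsmul 1 x) x"
    by (rule rel_via_coord[of _ s _ "emb 1 * ?x" "?x"];
        (intro coord_radd_cong coord_rsmul_cong coord_rzero_cong cong_A_refl)?)
      (simp_all add: le algebra_simps)
qed

lemma coord_pair_self: "coord s (s, c) = emb c / emb (r s)"
  by (simp add: coord_def e_refl)

lemma cls_pair_eq_zero_iff: "cls (s, c) = cls rzero \<longleftrightarrow> emb c / emb (r s) \<in> A"
  using rel_iff_coord[of "(s, c)" s rzero] fst_rzero_le
  by (simp add: cls_eq_iff coord_pair_self coord_rzero)

lemma cls_pair_lift: "m \<le> s \<Longrightarrow> cls (m, c) = cls (s, c * r_quot m s * e m s)"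
  using rel_lift[of "(m, c)" s] by (simp add: cls_eq_iff lift_def rel_sym)

lemma cls_at_level: "fst x \<le> s \<Longrightarrow> \<exists>c. cls x = cls (s, c)"
  using cls_pair_lift[of "fst x" s "snd x"] by auto

lemma uniserial_quotient: "uniserial quotient_rmod"
proof (rule uniserialI[OF is_rmodule_quotient])
  fix X Y assume "X \<in> mcarrier quotient_rmod" "Y \<in> mcarrier quotient_rmod"
  then obtain x y where xy: "X = cls x" "Y = cls y" by auto
  define s where "s = max (fst x) (fst y)"
  obtain a b where ab: "X = cls (s, a)" "Y = cls (s, b)"
    using cls_at_level[of x s] cls_at_level[of y s] xy by (auto simp: s_def)
  have "a dvd b \<or> b dvd a" using valuation unfolding valuation_domain_def by blast
  then show "(\<exists>k. Y = msmul quotient_rmod k X) \<or> (\<exists>k. X = msmul quotient_rmod k Y)"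
    using ab by (auto elim!: dvdE simp: mult.commute)
qed

text \<open>An isomorphism onto some \<open>J'/A'\<close> sends the class of \<open>(v, c)\<close> to \<open>c q\<^sub>v + A'\<close>.\<close>
lemma standard_coordinates:
  assumes "standard quotient_rmod"
  obtains A' :: "'a fract set" and q where "Q_submodule A'"
    and "\<And>c v. emb c / emb (r v) \<in> A \<longleftrightarrow> emb c * q v \<in> A'"
    and "\<And>m s. m \<le> s \<Longrightarrow> q m - emb (r_quot m s * e m s) * q s \<in> A'"
proof -
  obtain J' A' f where QA': "Q_submodule A'"
    and bij: "bij_betw f (range cls) (mcarrier (qmod J' A'))"
    and hom: "\<forall>k. \<forall>X\<in>range cls. f (msmul quotient_rmod k X) = msmul (qmod J' A') k (f X)"
    using assms unfolding standard_def rmod_iso_def by auto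
  have "\<exists>q. f (cls (v, 1)) = (\<lambda>a. q + a) ` A'" for v
    using bij_betw_apply[OF bij, of "cls (v, 1)"] by (auto simp: qmod_def)
  then obtain q where q: "\<And>v. f (cls (v, 1)) = (\<lambda>a. q v + a) ` A'" by metis
  have f_pair: "f (cls (v, c)) = (\<lambda>a. emb c * q v + a) ` A'" for v c
    using hom[rule_format, of "cls (v, 1)" c] by (simp add: q msmul_qmod_coset[OF QA'])
  have f_eq_iff: "cls (v, c) = cls (v', c') \<longleftrightarrow> emb c * q v - emb c' * q v' \<in> A'" for v c v' c'
    using bij_betw_imp_inj_on[OF bij]
    by (auto simp: inj_on_eq_iff f_pair[symmetric] qmod_coset_eq_iff[OF QA', symmetric])
  show ?thesis
  proof (rule that[OF QA'])
    show "emb c / emb (r v) \<in> A \<longleftrightarrow> emb c * q v \<in> A'" for c v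
      using cls_pair_eq_zero_iff[of v c] cls_pair_eq_zero_iff[of v 0] f_eq_iff[of v c v 0]
        Q_submoduleD(1)[OF Q_submodule_A] by simp
    show "q m - emb (r_quot m s * e m s) * q s \<in> A'" if "m \<le> s" for m s
      using cls_pair_lift[OF that, of 1] f_eq_iff by simp
  qed
qed

end

locale proper_coherent_system = coherent_system r A e enc
  for r :: "'w::wellorder \<Rightarrow> 'a::idom" and A e enc +
  assumes not_all_inv_r_in_A: "\<exists>b. 1 / emb (r b) \<notin> A"
begin

definition beta :: 'w where
  "beta = (LEAST b. 1 / emb (r b) \<notin> A)"

lemma inv_r_beta_notin: "1 / emb (r beta) \<notin> A"
  unfolding beta_def using not_all_inv_r_in_A by (rule LeastI_ex)

lemma below_beta_in_A: assumes "m < beta" shows "emb c / emb (r m) \<in> A"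
proof -
  have "1 / emb (r m) \<in> A" using not_less_Least[OF assms[unfolded beta_def]] by simp
  then have "emb c * (1 / emb (r m)) \<in> A" by (rule Q_submoduleD(3)[OF Q_submodule_A])
  then show ?thesis by simp
qed

lemma r_beta_mult_A_nonunit:
  assumes "y \<in> A" obtains p where "emb (r beta) * y = emb p" and "\<not> p dvd 1"
proof -
  obtain p where "y = emb p * (1 / emb (r beta))" "\<not> p dvd 1"
    using valuation_submodule_nonunit_multiple[OF valuation Q_submodule_A inv_r_beta_notin assms] .
  then show ?thesis using that r_nonzero[of beta] by simp
qed

definition x_beta :: "'a fract set" where
  "x_beta = cls (beta, 1)"

lemma x_beta_nonzero: "x_beta \<noteq> mzero quotient_rmod"
  using cls_pair_eq_zero_iff[of beta 1] inv_r_beta_notin by (simp add: x_beta_def)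

lemma Ann_x_beta: "emb ` Ann quotient_rmod x_beta = (*) (emb (r beta)) ` A"
proof (intro set_eqI iffI)
  fix z assume "z \<in> emb ` Ann quotient_rmod x_beta"
  then obtain k where "z = emb k" "emb k / emb (r beta) \<in> A"
    by (auto simp: Ann_def x_beta_def cls_pair_eq_zero_iff)
  moreover have "emb k = emb (r beta) * (emb k / emb (r beta))" using r_nonzero[of beta] by simp
  ultimately show "z \<in> (*) (emb (r beta)) ` A" by (metis rev_image_eqI)
next
  fix z assume "z \<in> (*) (emb (r beta)) ` A"
  then obtain y where y: "y \<in> A" "z = emb (r beta) * y" by blast
  obtain p where p: "emb (r beta) * y = emb p" using r_beta_mult_A_nonunit[OF y(1)] by blast
  then have "emb p / emb (r beta) = y" using r_nonzero[of beta] by (simp add: divide_eq_eq mult.commute)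
  then have "emb p / emb (r beta) \<in> A" using y(1) by simp
  then have "p \<in> Ann quotient_rmod x_beta"
    by (simp add: Ann_def x_beta_def cls_pair_eq_zero_iff)
  then show "z \<in> emb ` Ann quotient_rmod x_beta" using y p by simp
qed

lemma divisor_of_x_beta:
  assumes "X \<in> mcarrier quotient_rmod" "msmul quotient_rmod k X = x_beta"
  obtains s c w where "w dvd 1" and "k * c * r beta = w * r s"
proof -
  obtain x where "X = cls x" using assms(1) by auto
  define s where "s = max (fst x) beta"
  obtain c where "X = cls (s, c)" using cls_at_level[of x s] \<open>X = cls x\<close> by (auto simp: s_def)
  then have "cls (s, k * c) = cls (beta, 1)" using assms(2) by (simp add: x_beta_def)
  moreover have bs: "beta \<le> s" by (simp add: s_def)
  ultimately have "cong_A (emb (k * c) / emb (r s)) (emb (e beta s) / emb (r beta))"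
    using rel_iff_coord[of "(s, k * c)" s "(beta, 1)"] by (simp add: cls_eq_iff coord_def e_refl)
  then obtain p where p: "emb (r beta) * (emb (k * c) / emb (r s) - emb (e beta s) / emb (r beta)) = emb p"
    and "\<not> p dvd 1"
    by (rule r_beta_mult_A_nonunit)
  then have "(e beta s + p) dvd 1"
    using valuation_unit_add_nonunit[OF valuation e_unit[OF bs]] by blast
  moreover have "emb (r beta) * emb (k * c) / emb (r s) - emb (e beta s) = emb p"
    using p r_nonzero[of beta] by (simp add: right_diff_distrib)
  then have "emb (r beta) * emb (k * c) / emb (r s) = emb (e beta s + p)"
    by (simp add: diff_eq_eq add.commute)
  then have "emb (k * c * r beta) = emb ((e beta s + p) * r s)"
    using r_nonzero[of s] by (simp add: divide_eq_eq ac_simps)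
  then have "k * c * r beta = (e beta s + p) * r s" by (simp only: emb_eq_iff)
  ultimately show ?thesis by (rule that)
qed

lemma Dset_x_beta_subset: "Dset quotient_rmod x_beta \<subseteq> (*) (emb (r beta)) ` (\<Union>v. inv_R (r v))"
proof
  fix z assume "z \<in> Dset quotient_rmod x_beta"
  then obtain k X where z: "z \<in> inv_R k" and X: "X \<in> mcarrier quotient_rmod"
    "msmul quotient_rmod k X = x_beta"
    unfolding Dset_def by blast
  from X obtain s c w where "w dvd 1" and kc: "k * c * r beta = w * r s"
    by (rule divisor_of_x_beta)
  then obtain w' where w': "w * w' = 1" by (metis dvdE)
  have "k \<noteq> 0" using kc w' r_nonzero[of s] by auto
  then obtain a where "z = emb a / emb k" using z by (auto simp: inv_R_eq)
  also have "\<dots> = emb (r beta) * (emb (a * c * w') / emb (r s))"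
  proof -
    have "emb (k * c * r beta) * emb w' = emb (r s)"
      unfolding kc using w' by (simp add: ac_simps emb_unit_inverse)
    then show ?thesis using \<open>k \<noteq> 0\<close> r_nonzero[of s] by (simp add: field_simps)
  qed
  finally have "z = emb (r beta) * (emb (a * c * w') / emb (r s))" .
  moreover have "emb (a * c * w') / emb (r s) \<in> inv_R (r s)"
    unfolding inv_R_eq[OF r_nonzero] by blast
  ultimately show "z \<in> (*) (emb (r beta)) ` (\<Union>v. inv_R (r v))" by blast
qed

lemma Dset_x_beta_supset: "(*) (emb (r beta)) ` (\<Union>v. inv_R (r v)) \<subseteq> Dset quotient_rmod x_beta"
proof
  fix z assume "z \<in> (*) (emb (r beta)) ` (\<Union>v. inv_R (r v))"
  then obtain v a where z: "z = emb (r beta) * (emb a / emb (r v))"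
    using r_nonzero by (auto simp: inv_R_eq)
  define s where "s = max v beta"
  have bs: "beta \<le> s" and vs: "v \<le> s" by (auto simp: s_def)
  define k where "k = r_quot beta s * e beta s"
  have "k \<noteq> 0" using r_quot_nonzero[OF bs] e_unit[OF bs] by (auto simp: k_def)
  have "msmul quotient_rmod k (cls (s, 1)) = x_beta"
    using cls_pair_lift[OF bs, of 1] by (simp add: x_beta_def k_def)
  moreover have "z \<in> inv_R k"
  proof -
    have "emb (r beta) * emb (r_quot beta s) = emb (r v) * emb (r_quot v s)"
      using r_quot[OF bs] r_quot[OF vs] by (metis emb_mult)
    moreover have "z * emb (r v) = emb a * emb (r beta)"
      using z r_nonzero[of v] by simp
    ultimately have "z * emb (r_quot beta s) * emb (r v) = emb a * emb (r_quot v s) * emb (r v)"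
      by algebra
    then have "z * emb (r_quot beta s) = emb a * emb (r_quot v s)"
      using r_nonzero[of v] by simp
    then have "z = emb (a * r_quot v s * e beta s) / emb k"
      using r_quot_nonzero[OF bs] \<open>k \<noteq> 0\<close> by (simp add: k_def field_simps)
    then show ?thesis unfolding inv_R_eq[OF \<open>k \<noteq> 0\<close>] by blast
  qed
  moreover have "cls (s, 1) \<in> mcarrier quotient_rmod" by simp
  ultimately show "z \<in> Dset quotient_rmod x_beta" unfolding Dset_def by blast
qed

lemma has_type_quotient: "has_type quotient_rmod (\<Union>v. inv_R (r v)) A"
  unfolding has_type_def
proof (intro bexI conjI)
  show "rmod_iso (qmod (\<Union>v. inv_R (r v)) A)
      (qmod (Dset quotient_rmod x_beta) (emb ` Ann quotient_rmod x_beta))"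
    unfolding equalityI[OF Dset_x_beta_subset Dset_x_beta_supset] Ann_x_beta
    by (rule rmod_iso_qmod_image_mult) (simp add: r_nonzero)
qed (use x_beta_nonzero in \<open>auto simp: x_beta_def\<close>)

lemma coordinate_ratio_unit:
  assumes QA': "Q_submodule A'"
    and Z: "\<And>c v. emb c / emb (r v) \<in> A \<longleftrightarrow> emb c * q v \<in> A'"
    and T: "\<And>m s. m \<le> s \<Longrightarrow> q m - emb (r_quot m s * e m s) * q s \<in> A'"
    and bs: "beta \<le> s"
  obtains g where "g dvd 1" and "emb g * (q beta * emb (r beta)) = q s * emb (r s)"
proof -
  have "q beta \<notin> A'" using Z[of 1 beta] inv_r_beta_notin by simp
  then obtain p where p: "q beta - emb (r_quot beta s * e beta s) * q s = emb p * q beta"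
    and "\<not> p dvd 1"
    using valuation_submodule_nonunit_multiple[OF valuation QA' _ T[OF bs]] by blast
  then have "(1 - p) dvd 1" using valuation_unit_add_nonunit[OF valuation one_dvd, of "- p"] by simp
  moreover obtain e' where e': "e beta s * e' = 1" using e_unit[OF bs] by (rule dvdE) simp
  then have "e' dvd 1" using dvd_triv_right by metis
  ultimately have "((1 - p) * e') dvd 1" by (rule units_mult)
  moreover have "emb (1 - p) * emb e' * (q beta * emb (r beta))
      = q s * (emb (r beta) * emb (r_quot beta s))"
    using p emb_unit_inverse[OF e'] by (simp only: emb_mult emb_diff emb_1) algebra
  then have "emb ((1 - p) * e') * (q beta * emb (r beta)) = q s * emb (r s)"
    by (simp add: r_quot[OF bs])
  ultimately show ?thesis by (rule that)
qed

lemma trivial_if_standard: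
  assumes "standard quotient_rmod"
  shows "trivial_system e"
proof -
  obtain A' q where QA': "Q_submodule A'"
    and Z: "\<And>c v. emb c / emb (r v) \<in> A \<longleftrightarrow> emb c * q v \<in> A'"
    and T: "\<And>m s. m \<le> s \<Longrightarrow> q m - emb (r_quot m s * e m s) * q s \<in> A'"
    using standard_coordinates[OF assms] by blast
  define l where "l = q beta * emb (r beta)"
  have "q beta \<noteq> 0" using Z[of 1 beta] inv_r_beta_notin Q_submoduleD(1)[OF QA'] by auto
  then have "l \<noteq> 0" using r_nonzero[of beta] by (simp add: l_def)
  have ex_g: "\<exists>g. g dvd 1 \<and> emb g * l = q s * emb (r s)" if "beta \<le> s" for s
    using coordinate_ratio_unit[OF QA' Z T that] unfolding l_def by blast
  define g where "g s = (if beta \<le> s then SOME g. g dvd 1 \<and> emb g * l = q s * emb (r s) else 1)"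
    for s
  have G: "g s dvd 1 \<and> emb (g s) * l = q s * emb (r s)" if "beta \<le> s" for s
    using someI_ex[OF ex_g[OF that]] that by (simp add: g_def)
  have "cong_at m (g m) (e m s * g s)" if "m < s" for m s
  proof (cases "m < beta")
    case True
    then show ?thesis by (simp add: cong_at_def below_beta_in_A[where c = "g m - e m s * g s", simplified])
  next
    case False
    then have bm: "beta \<le> m" and ms: "m \<le> s" using that by auto
    have "(emb (g m) * emb (r_quot m s) * q s - emb (g s) * q m) * (l * emb (r m)) = 0"
      using G[OF bm, THEN conjunct2] G[OF order_trans[OF bm ms], THEN conjunct2]
        emb_mult[of "r m" "r_quot m s"]
      unfolding r_quot[OF ms, symmetric] by algebra
    then have "emb (g m) * emb (r_quot m s) * q s = emb (g s) * q m"
      using \<open>l \<noteq> 0\<close> r_nonzero[of m] by simp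
    then have "emb (g m - e m s * g s) * q m = emb (g m) * (q m - emb (r_quot m s * e m s) * q s)"
      by (simp add: algebra_simps)
    then have "emb (g m - e m s * g s) * q m \<in> A'"
      using Q_submoduleD(3)[OF QA' T[OF ms]] by simp
    then show ?thesis using Z[of "g m - e m s * g s" m] by (simp add: cong_at_def)
  qed
  moreover have "g s dvd 1" for s using G by (cases "beta \<le> s") (simp_all add: g_def)
  ultimately show ?thesis unfolding trivial_system_def by blast
qed

end

section \<open>A coherent system that is not trivial\<close>

locale filtered_chain = valued_chain r A for r :: "'w::wellorder \<Rightarrow> 'a::idom" and A +
  fixes N :: "'w \<Rightarrow> 'a set"
  assumes filtration: "omega1_filtration N r"
    and omega1: "omega1_type TYPE('w)"
begin

lemma N_mono: "a \<le> b \<Longrightarrow> N a \<subseteq> N b"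
  using filtration by (simp add: omega1_filtration_def)

lemma N_union: "(\<Union>a. N a) = UNIV"
  using filtration by (simp add: omega1_filtration_def)

lemma r_in_N_iff: "r v \<in> N a \<longleftrightarrow> v < a"
  using filtration by (simp add: omega1_filtration_def)

lemma N_one: "1 \<in> N d" and N_zero: "0 \<in> N d" and N_mult: "x \<in> N d \<Longrightarrow> y \<in> N d \<Longrightarrow> x * y \<in> N d"
  using filtration by (simp_all add: omega1_filtration_def countable_subring_def)

lemma N_units: "{x \<in> N d. x dvd 1} = {x \<in> N d. \<exists>y\<in>N d. x * y = 1}"
  using filtration by (simp add: omega1_filtration_def)

lemma unit_inv_in_N:
  assumes "u dvd 1" and "u \<in> N d" shows "unit_inv u \<in> N d"
proof -
  have "u \<in> {x \<in> N d. \<exists>y\<in>N d. x * y = 1}"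
    unfolding N_units[symmetric] using assms by simp
  then obtain y where y: "y \<in> N d" "u * y = 1" by blast
  then have "u \<noteq> 0" by auto
  moreover have "u * unit_inv u = u * y" using unit_inv[OF assms(1)] y(2) by simp
  ultimately have "unit_inv u = y" by simp
  then show ?thesis using y(1) by simp
qed

definition system_in_N :: "('w \<Rightarrow> 'w \<Rightarrow> 'a) \<Rightarrow> 'w \<Rightarrow> bool" where
  "system_in_N E d \<longleftrightarrow> (\<forall>m s. m < s \<and> s < d \<longrightarrow> E m s \<in> N d)"

lemma chain_column_in_N:
  assumes coh: "coherent_below E d" and "mono M" and M_less: "\<And>n. M n < d"
    and "system_in_N E d" and "m < d" and cofinal: "\<exists>n. m \<le> M n"
  shows "chain_column E M m \<in> N d"
proof -
  have E_N: "E m s \<in> N d" if "m \<le> s" "s < d" for m s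
    using that coh \<open>system_in_N E d\<close> N_one
    by (cases "m = s") (auto simp: coherent_below_def system_in_N_def)
  have step_N: "E (M n) (M (Suc n)) \<in> N d" "E (M n) (M (Suc n)) dvd 1" for n
    using monoD[OF \<open>mono M\<close>, of n "Suc n"] M_less[of "Suc n"]
    by (simp_all add: E_N E_unit[OF coh \<open>mono M\<close> M_less])
  have "chain_units E M n \<in> N d" for n
  proof (induction n)
    case (Suc n)
    then show ?case using N_mult unit_inv_in_N step_N by simp
  qed (simp add: N_one)
  moreover have "m \<le> M (LEAST n. m \<le> M n)" using cofinal by (rule LeastI_ex)
  then have "E m (M (LEAST n. m \<le> M n)) \<in> N d" using E_N M_less by blast
  ultimately show ?thesis by (simp add: chain_column_def Let_def N_mult)
qed

lemma coherent_column_exists: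
  assumes coh: "coherent_below E d"
  obtains w where "coherent_column E d w" and "system_in_N E d \<Longrightarrow> \<forall>m<d. w m \<in> N d"
proof (cases "{m. m < d} = {}")
  case True
  then show ?thesis by (intro that[of "\<lambda>_. 1"]) (auto simp: coherent_column_def N_one)
next
  case False
  have cnt: "countable {m. m < d}" using omega1 by (simp add: omega1_type_def)
  obtain M :: "nat \<Rightarrow> 'w" where "mono M" and "\<And>n. M n \<in> {m. m < d}"
    and "\<And>m. m \<in> {m. m < d} \<Longrightarrow> \<exists>n. m \<le> M n"
    using countable_cofinal_mono_seq[OF cnt False] by blast
  then have M_less: "\<And>n. M n < d" and cofinal: "\<And>m. m < d \<Longrightarrow> \<exists>n. m \<le> M n" by auto
  show ?thesis
  proof (rule that)
    show "coherent_column E d (chain_column E M)"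
      using coh \<open>mono M\<close> M_less cofinal by (rule coherent_column_chain)
    show "\<forall>m<d. chain_column E M m \<in> N d" if "system_in_N E d"
    proof (intro allI impI)
      fix m assume "m < d"
      show "chain_column E M m \<in> N d"
        by (rule chain_column_in_N[OF coh \<open>mono M\<close> M_less that \<open>m < d\<close> cofinal[OF \<open>m < d\<close>]])
    qed
  qed
qed

definition escapes_N :: "'w \<Rightarrow> ('w \<Rightarrow> 'a) \<Rightarrow> bool" where
  "escapes_N d w \<longleftrightarrow> (\<forall>g. (\<forall>m. g m dvd 1) \<and> (\<forall>m<d. g m \<in> N d)
     \<longrightarrow> \<not> (\<forall>m<d. cong_at m (g m) (w m * g d)))"

lemma escapes_N_mult_Eprime:
  assumes w_unit: "\<And>m. m < d \<Longrightarrow> w m dvd 1" and w_N: "\<And>m. m < d \<Longrightarrow> w m \<in> N d"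
    and u: "\<forall>f. f dvd 1 \<longrightarrow>
      (\<exists>s<d. emb (u s * f) \<notin> {emb n + y | n y. n \<in> N d \<and> y \<in> scal (r s) A})"
  shows "escapes_N d (\<lambda>m. w m * u m)"
  unfolding escapes_N_def
proof (intro allI impI notI)
  fix g assume g: "(\<forall>m. g m dvd 1) \<and> (\<forall>m<d. g m \<in> N d)"
    and cong: "\<forall>m<d. cong_at m (g m) (w m * u m * g d)"
  obtain s where "s < d"
    and s: "emb (u s * g d) \<notin> {emb n + y | n y. n \<in> N d \<and> y \<in> scal (r s) A}"
    using u[rule_format, of "g d"] g by blast
  define w' where "w' = unit_inv (w s)"
  have "w' * g s \<in> N d"
    unfolding w'_def using g \<open>s < d\<close> by (intro N_mult unit_inv_in_N w_unit w_N) auto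
  have "cong_at s (w' * g s) (w' * (w s * u s * g d))" using cong \<open>s < d\<close> by (simp add: cong_at_mult_left)
  also have "w' * (w s * u s * g d) = u s * g d"
    using unit_inv[OF w_unit[OF \<open>s < d\<close>]] by (simp add: w'_def ac_simps)
  finally have "cong_at s (u s * g d) (w' * g s)" by (rule cong_at_sym)
  then have "emb (u s * g d) - emb (w' * g s) \<in> scal (r s) A"
    by (simp add: scal_iff_divide[OF r_nonzero] cong_at_def)
  moreover have "emb (u s * g d) = emb (w' * g s) + (emb (u s * g d) - emb (w' * g s))" by simp
  ultimately have "emb (u s * g d) \<in> {emb n + y | n y. n \<in> N d \<and> y \<in> scal (r s) A}"
    using \<open>w' * g s \<in> N d\<close> by blast
  then show False using s by blast
qed

definition good_column :: "('w \<Rightarrow> 'w \<Rightarrow> 'a) \<Rightarrow> 'w \<Rightarrow> ('w \<Rightarrow> 'a) \<Rightarrow> bool" where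
  "good_column E d w \<longleftrightarrow> coherent_column E d w
     \<and> (d \<in> Eprime r N A \<and> system_in_N E d \<longrightarrow> escapes_N d w)"

lemma good_column_exists:
  assumes "coherent_below E d" obtains w where "good_column E d w"
proof -
  obtain w0 where w0: "coherent_column E d w0" and w0_N: "system_in_N E d \<Longrightarrow> \<forall>m<d. w0 m \<in> N d"
    using coherent_column_exists[OF assms] by blast
  show ?thesis
  proof (cases "d \<in> Eprime r N A \<and> system_in_N E d")
    case False
    then show ?thesis using w0 that by (auto simp: good_column_def)
  next
    case True
    then obtain u where "Tseq r A d u" and u: "\<forall>f. f dvd 1 \<longrightarrow>
        (\<exists>s<d. emb (u s * f) \<notin> {emb n + y | n y. n \<in> N d \<and> y \<in> scal (r s) A})"
      unfolding Eprime_def by blast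
    have "coherent_column E d (\<lambda>m. w0 m * u m)"
      using w0 \<open>Tseq r A d u\<close> by (rule coherent_column_mult_Tseq)
    moreover have "escapes_N d (\<lambda>m. w0 m * u m)"
      using w0 w0_N True u by (intro escapes_N_mult_Eprime) (auto simp: coherent_column_def)
    ultimately show ?thesis using that by (auto simp: good_column_def)
  qed
qed

lemma good_column_cong:
  assumes "\<And>m s. s < d \<Longrightarrow> E m s = E' m s"
  shows "good_column E d w \<longleftrightarrow> good_column E' d w"
  using coherent_column_cong[of d E E' w w] assms unfolding good_column_def system_in_N_def by auto

text \<open>Transfinite recursion: \<open>column d m\<close> is the unit \<open>e m d\<close>, chosen as a good column for the
  system already built below \<open>d\<close>.\<close>
definition next_column :: "('w \<Rightarrow> 'w \<Rightarrow> 'a) \<Rightarrow> 'w \<Rightarrow> 'w \<Rightarrow> 'a" where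
  "next_column F d = (SOME w. good_column (\<lambda>m s. if m = s then 1 else F s m) d w)"

definition column :: "'w \<Rightarrow> 'w \<Rightarrow> 'a" where
  "column = wfrec {(x, y). x < y} next_column"

definition constructed_system :: "'w \<Rightarrow> 'w \<Rightarrow> 'a" where
  "constructed_system m s = (if m = s then 1 else column s m)"

lemma column_unfold: "column d = next_column (cut column {(x, y). x < y} d) d"
  unfolding column_def by (rule wfrec[OF wf])

lemma good_column_constructed: "good_column constructed_system d (column d)"
proof (induction d rule: less_induct)
  case (less d)
  define E where "E m s = (if m = s then 1 else cut column {(x, y). x < y} d s m)" for m s
  have agree: "E m s = constructed_system m s" if "s < d" for m s
    using that by (simp add: E_def constructed_system_def cut_apply)
  have "coherent_below E d"
  proof (rule coherent_below_of_columns)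
    show "E m m = 1" for m by (simp add: E_def)
    show "coherent_column E s (\<lambda>m. E m s)" if "s < d" for s
    proof -
      have below: "E m k = constructed_system m k" if "k < s" for m k
        using agree less_trans[OF that \<open>s < d\<close>] .
      have col: "E m s = column s m" if "m < s" for m
        using agree[OF \<open>s < d\<close>] less_imp_neq[OF that] by (simp add: constructed_system_def)
      have "coherent_column constructed_system s (column s)"
        using less[OF that] by (simp add: good_column_def)
      then show ?thesis using coherent_column_cong[OF below col] by simp
    qed
  qed
  then obtain w where "good_column E d w" by (rule good_column_exists)
  moreover have "column d = (SOME w. good_column E d w)"
    by (subst column_unfold) (simp add: next_column_def E_def[abs_def])
  ultimately have "good_column E d (column d)" using someI[of "good_column E d"] by simp
  then show ?case using agree good_column_cong by blast
qed

lemma coherent_below_constructed: "coherent_below constructed_system d"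
proof (rule coherent_below_of_columns)
  show "constructed_system m m = 1" for m by (simp add: constructed_system_def)
  show "coherent_column constructed_system s (\<lambda>m. constructed_system m s)" for s
  proof -
    have "coherent_column constructed_system s (column s)"
      using good_column_constructed[of s] by (simp add: good_column_def)
    moreover have "constructed_system m s = column s m" if "m < s" for m
      using less_imp_neq[OF that] by (simp add: constructed_system_def)
    ultimately show ?thesis
      using coherent_column_cong[of s constructed_system constructed_system
          "\<lambda>m. constructed_system m s" "column s"] by simp
  qed
qed

lemma constructed_system_unit:
  assumes "m \<le> s" shows "constructed_system m s dvd 1"
proof -
  obtain d where "s < d" using omega1_exists_greater[OF omega1] by blast
  with assms show ?thesis by (rule coherent_below_unit[OF coherent_below_constructed])
qed

lemma constructed_system_coherent:
  assumes "m \<le> k" and "k \<le> s"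
  shows "cong_at m (constructed_system m k * constructed_system k s) (constructed_system m s)"
proof -
  obtain d where "s < d" using omega1_exists_greater[OF omega1] by blast
  with assms show ?thesis by (rule coherent_below_cong_at[OF coherent_below_constructed])
qed

lemma constructed_system_escapes:
  assumes "d \<in> Eprime r N A" and "system_in_N constructed_system d"
  shows "escapes_N d (\<lambda>m. constructed_system m d)"
proof -
  have "escapes_N d (column d)"
    using good_column_constructed[of d] assms by (simp add: good_column_def)
  then show ?thesis by (simp add: escapes_N_def constructed_system_def less_imp_neq)
qed

lemma exists_inv_r_notin_A:
  assumes "nonzero_class (Eprime r N A)" shows "\<exists>b. 1 / emb (r b) \<notin> A"
proof (rule ccontr)
  assume "\<not> (\<exists>b. 1 / emb (r b) \<notin> A)"
  then have inv_r: "1 / emb (r b) \<in> A" for b by blast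
  obtain d where "d \<in> Eprime r N A"
    using assms omega1_club_UNIV[OF omega1] unfolding nonzero_class_def by blast
  then obtain u where u: "\<forall>f. f dvd 1 \<longrightarrow>
      (\<exists>s<d. emb (u s * f) \<notin> {emb n + y | n y. n \<in> N d \<and> y \<in> scal (r s) A})"
    unfolding Eprime_def by blast
  obtain s where s: "emb (u s) \<notin> {emb n + y | n y. n \<in> N d \<and> y \<in> scal (r s) A}"
    using u[rule_format, of 1] by auto
  have "emb (u s) * (1 / emb (r s)) \<in> A" using Q_submoduleD(3)[OF Q_submodule_A inv_r] .
  then have "emb (u s) \<in> scal (r s) A" by (simp add: scal_iff_divide[OF r_nonzero])
  then have "emb (u s) \<in> {emb n + y | n y. n \<in> N d \<and> y \<in> scal (r s) A}"
    using N_zero by force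
  then show False using s by blast
qed

lemma constructed_system_nontrivial:
  assumes "nonzero_class (Eprime r N A)" shows "\<not> trivial_system constructed_system"
proof
  assume "trivial_system constructed_system"
  then obtain g where g_unit: "\<forall>m. g m dvd 1"
    and g_cong: "\<forall>m s. m < s \<longrightarrow> cong_at m (g m) (constructed_system m s * g s)"
    unfolding trivial_system_def by blast
  define G where "G s = insert (g s) ((\<lambda>m. constructed_system m s) ` {m. m < s})" for s
  have cG: "countable (G s)" for s using omega1 by (simp add: G_def omega1_type_def)
  have "club {d. \<forall>s<d. G s \<subseteq> N d}"
    by (rule omega1_club_absorbing[where G = G, OF omega1 N_mono N_union cG])
  then have "Eprime r N A \<inter> {d. \<forall>s<d. G s \<subseteq> N d} \<noteq> {}"
    using assms unfolding nonzero_class_def by blast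
  then obtain d where "d \<in> Eprime r N A" and d: "\<And>s. s < d \<Longrightarrow> G s \<subseteq> N d" by blast
  have "system_in_N constructed_system d"
    unfolding system_in_N_def using d by (auto simp: G_def)
  then have "escapes_N d (\<lambda>m. constructed_system m d)"
    using \<open>d \<in> Eprime r N A\<close> by (rule constructed_system_escapes[rotated])
  moreover have "\<forall>m<d. g m \<in> N d" using d by (auto simp: G_def)
  ultimately have "\<not> (\<forall>m<d. cong_at m (g m) (constructed_system m d * g d))"
    using g_unit unfolding escapes_N_def by blast
  then show False using g_cong by blast
qed

lemma inj_r: "inj r"
proof (rule injI)
  fix v w assume eq: "r v = r w"
  have "\<not> a < b" if "r a = r b" for a b
  proof
    assume "a < b"
    then have "r b \<in> N b" using r_in_N_iff[of a b] that by simp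
    then show False using r_in_N_iff[of b b] by simp
  qed
  then have "\<not> v < w" "\<not> w < v" using eq by auto
  then show "v = w" by (meson linorder_neqE)
qed

lemma infinite_ring: "infinite (UNIV :: 'a set)"
proof
  assume "finite (UNIV :: 'a set)"
  then have "finite (range r)" by (rule finite_subset[rotated]) simp
  then have "finite (UNIV :: 'w set)" using inj_r by (rule finite_imageD)
  moreover have "\<not> countable (UNIV :: 'w set)" using omega1 by (simp add: omega1_type_def)
  ultimately show False using countable_finite by blast
qed

lemma exists_inj_encoding: "\<exists>enc :: 'w \<times> 'a \<Rightarrow> 'a fract. inj enc"
proof -
  have "(card_of (UNIV \<times> UNIV :: ('a \<times> 'a) set), card_of (UNIV :: 'a set)) \<in> ordIso"
    using infinite_ring by (rule card_of_Times_same_infinite)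
  then obtain f :: "'a \<times> 'a \<Rightarrow> 'a" where "bij_betw f (UNIV \<times> UNIV) UNIV"
    using card_of_ordIso by blast
  then have "inj f" by (simp add: bij_betw_def)
  have "inj (\<lambda>x :: 'w \<times> 'a. emb (f (r (fst x), snd x)))"
  proof (rule injI)
    fix x y :: "'w \<times> 'a" assume "emb (f (r (fst x), snd x)) = emb (f (r (fst y), snd y))"
    then have "f (r (fst x), snd x) = f (r (fst y), snd y)" by simp
    then have "(r (fst x), snd x) = (r (fst y), snd y)" by (rule injD[OF \<open>inj f\<close>])
    moreover from this have "fst x = fst y" using injD[OF inj_r, of "fst x" "fst y"] by simp
    ultimately show "x = y" by (simp add: prod_eq_iff)
  qed
  then show ?thesis by blast
qed

end

theorem theorem7:
  fixes r :: "'w::wellorder \<Rightarrow> 'a::idom"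
    and N :: "'w \<Rightarrow> 'a set"
    and J A :: "'a fract set"
  assumes "valuation_domain TYPE('a)"
    and "not_field_of_fractions TYPE('a)"
    and "(card_of (UNIV :: 'a set), cardSuc natLeq) \<in> ordIso"
    and "omega1_type TYPE('w)"
    and "\<forall>v. r v \<noteq> 0"
    and "\<forall>m v. m < v \<longrightarrow> r m dvd r v"
    and "J = (\<Union>v. inv_R (r v))"
    and "Q_submodule A" and "A \<subseteq> J"
    and "omega1_filtration N r"
    and "nonzero_class (Eprime r N A)"
  shows "\<exists>U :: ('a, 'a fract set) rmod. uniserial U \<and> \<not> standard U \<and> has_type U J A"
proof -
  interpret filtered_chain r A N
    using assms(1,4,5,6,8,10) by unfold_locales auto
  obtain enc :: "'w \<times> 'a \<Rightarrow> 'a fract" where "inj enc"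
    using exists_inj_encoding by blast
  interpret U: proper_coherent_system r A constructed_system enc
    using constructed_system_unit constructed_system_coherent \<open>inj enc\<close>
      exists_inv_r_notin_A[OF assms(11)]
    by unfold_locales (simp_all add: constructed_system_def)
  have "\<not> standard U.quotient_rmod"
    using U.trivial_if_standard constructed_system_nontrivial[OF assms(11)] by blast
  then show ?thesis
    using U.uniserial_quotient U.has_type_quotient assms(7) by blast
qed

end
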